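(* Let $0<\alpha_1\le\dots\le\alpha_n\le1$, $\alpha_0:=0$. For all $p,q\in\mathcal{S}_2^n$, the fractional join of $p,q$ with respect to the valuation $v_{\boldsymbol\alpha}$ equals the formal combination $$\sum_{i=0}^{n-1}\Big(\frac1{1+\alpha_i}-\frac1{1+\alpha_{i+1}}\Big)\big((p\vee_L^iq)+(p\vee_R^iq)\big)+\frac{1-\alpha_n}{1+\alpha_n}(p\sqcup^nq)$$ (coefficients of equal elements added).
   Context: $\mathcal{S}_2=\{-,0,+\}$ with minimum $0$ and incomparable $-,+$; $\mathcal{S}_2^n$ has the componentwise order. Operations on $\mathcal{S}_2$: $x\sqcup y$ is the larger of $x,y$ if comparable and $0$ if $\{x,y\}=\{-,+\}$; $x\sqcup_+y=+$ if $\{x,y\}=\{-,+\}$, else $x\sqcup y$; $x\vee_Ly=x$ if $x\ne0$ and $y$ if $x=0$; $x\vee_Ry=y$ if $y\ne0$ and $x$ if $y=0$. For $i=0,\dots,n$: $\sqcup^i,\vee_L^i,\vee_R^i$ apply $\sqcup_+$ in the first $i$ coordinates and respectively $\sqcup,\vee_L,\vee_R$ in the remaining coordinates. Valuation: $v_i(0)=0,v_i(+)=1,v_i(-)=\alpha_i$, $v_{\boldsymbol\alpha}(x)=\sum_iv_i(x_i)$. Fractional join w.r.t. $v=v_{\boldsymbol\alpha}$: $I(p,q)$ is the set of elements on shortest $p$–$q$ paths of the covering graph; $v(u;p,q)=(v(u\wedge p)-v(p\wedge q),v(u\wedge q)-v(p\wedge q))$ ($\wedge$ = meet); $\mathcal{E}(p,q)$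 the $u\in I(p,q)$ with $v(u;p,q)$ a componentwise-maximal extreme point of the convex hull $\mathrm{Conv}I(p,q)$; $C(u;p,q)=\{w\in\mathbf{R}^2_{\ge0}:\langle w,v(u;p,q)\rangle=\max_{z\in\mathrm{Conv}I(p,q)}\langle w,z\rangle\}=\{(x,y)\ge0:y\cos\alpha\le x\sin\alpha,\ y\cos\beta\ge x\sin\beta\}$ ($0\le\beta\le\alpha\le\pi/2$), $[C]=\frac{\sin\alpha}{\sin\alpha+\cos\alpha}-\frac{\sin\beta}{\sin\beta+\cos\beta}$; the fractional join is $\sum_{u\in\mathcal{E}(p,q)}[C(u;p,q)]u$. *)

theory Defs
  imports "HOL-Analysis.Analysis"
begin

datatype s2 = Minus | Zero | Plus

definition s2_le :: "s2 \<Rightarrow> s2 \<Rightarrow> bool" where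
  "s2_le x y \<longleftrightarrow> x = Zero \<or> x = y"

definition s2_join :: "s2 \<Rightarrow> s2 \<Rightarrow> s2" where
  "s2_join x y = (if s2_le x y then y else if s2_le y x then x else Zero)"

definition s2_join_plus :: "s2 \<Rightarrow> s2 \<Rightarrow> s2" where
  "s2_join_plus x y = (if {x, y} = {Minus, Plus} then Plus else s2_join x y)"

definition s2_vL :: "s2 \<Rightarrow> s2 \<Rightarrow> s2" where
  "s2_vL x y = (if x \<noteq> Zero then x else y)"

definition s2_vR :: "s2 \<Rightarrow> s2 \<Rightarrow> s2" where
  "s2_vR x y = (if y \<noteq> Zero then y else x)"

definition s2_meet :: "s2 \<Rightarrow> s2 \<Rightarrow> s2" where
  "s2_meet x y = (if x = y then x else Zero)"

(* S_2^n: coordinates indexed 1..n, all other coordinates are Zero *)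
definition S2n :: "nat \<Rightarrow> (nat \<Rightarrow> s2) set" where
  "S2n n = {x. \<forall>j. (j = 0 \<or> n < j) \<longrightarrow> x j = Zero}"

definition leq :: "(nat \<Rightarrow> s2) \<Rightarrow> (nat \<Rightarrow> s2) \<Rightarrow> bool" where
  "leq x y \<longleftrightarrow> (\<forall>j. s2_le (x j) (y j))"

definition meet :: "(nat \<Rightarrow> s2) \<Rightarrow> (nat \<Rightarrow> s2) \<Rightarrow> (nat \<Rightarrow> s2)" where
  "meet x y = (\<lambda>j. s2_meet (x j) (y j))"

(* the operations sqcup^i, vee_L^i, vee_R^i: sqcup_+ on coordinates 1..i, f on the rest *)
definition op_i :: "nat \<Rightarrow> (s2 \<Rightarrow> s2 \<Rightarrow> s2) \<Rightarrow> (nat \<Rightarrow> s2) \<Rightarrow> (nat \<Rightarrow> s2) \<Rightarrow> (nat \<Rightarrow> s2)" where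
  "op_i i f p q = (\<lambda>j. if j \<le> i then s2_join_plus (p j) (q j) else f (p j) (q j))"

definition join_i where "join_i i = op_i i s2_join"
definition vL_i where "vL_i i = op_i i s2_vL"
definition vR_i where "vR_i i = op_i i s2_vR"

definition v_coord :: "(nat \<Rightarrow> real) \<Rightarrow> nat \<Rightarrow> s2 \<Rightarrow> real" where
  "v_coord \<alpha> j x = (case x of Zero \<Rightarrow> 0 | Plus \<Rightarrow> 1 | Minus \<Rightarrow> \<alpha> j)"

definition val :: "nat \<Rightarrow> (nat \<Rightarrow> real) \<Rightarrow> (nat \<Rightarrow> s2) \<Rightarrow> real" where
  "val n \<alpha> x = (\<Sum>j=1..n. v_coord \<alpha> j (x j))"

definition lt_n :: "nat \<Rightarrow> (nat \<Rightarrow> s2) \<Rightarrow> (nat \<Rightarrow> s2) \<Rightarrow> bool" where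
  "lt_n n x y \<longleftrightarrow> x \<in> S2n n \<and> y \<in> S2n n \<and> leq x y \<and> x \<noteq> y"

definition covers :: "nat \<Rightarrow> (nat \<Rightarrow> s2) \<Rightarrow> (nat \<Rightarrow> s2) \<Rightarrow> bool" where
  "covers n x y \<longleftrightarrow> lt_n n x y \<and> \<not> (\<exists>z. lt_n n x z \<and> lt_n n z y)"

definition adj :: "nat \<Rightarrow> (nat \<Rightarrow> s2) \<Rightarrow> (nat \<Rightarrow> s2) \<Rightarrow> bool" where
  "adj n x y \<longleftrightarrow> covers n x y \<or> covers n y x"

definition is_walk :: "nat \<Rightarrow> (nat \<Rightarrow> s2) list \<Rightarrow> (nat \<Rightarrow> s2) \<Rightarrow> (nat \<Rightarrow> s2) \<Rightarrow> bool" where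
  "is_walk n xs p q \<longleftrightarrow> xs \<noteq> [] \<and> hd xs = p \<and> last xs = q \<and> set xs \<subseteq> S2n n \<and>
     (\<forall>k. Suc k < length xs \<longrightarrow> adj n (xs ! k) (xs ! Suc k))"

definition is_shortest_path :: "nat \<Rightarrow> (nat \<Rightarrow> s2) list \<Rightarrow> (nat \<Rightarrow> s2) \<Rightarrow> (nat \<Rightarrow> s2) \<Rightarrow> bool" where
  "is_shortest_path n xs p q \<longleftrightarrow> is_walk n xs p q \<and> (\<forall>ys. is_walk n ys p q \<longrightarrow> length xs \<le> length ys)"

definition interval :: "nat \<Rightarrow> (nat \<Rightarrow> s2) \<Rightarrow> (nat \<Rightarrow> s2) \<Rightarrow> (nat \<Rightarrow> s2) set" where
  "interval n p q = {u. \<exists>xs. is_shortest_path n xs p q \<and> u \<in> set xs}"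

definition vpt :: "nat \<Rightarrow> (nat \<Rightarrow> real) \<Rightarrow> (nat \<Rightarrow> s2) \<Rightarrow> (nat \<Rightarrow> s2) \<Rightarrow> (nat \<Rightarrow> s2) \<Rightarrow> real \<times> real" where
  "vpt n \<alpha> u p q = (val n \<alpha> (meet u p) - val n \<alpha> (meet p q), val n \<alpha> (meet u q) - val n \<alpha> (meet p q))"

definition convI :: "nat \<Rightarrow> (nat \<Rightarrow> real) \<Rightarrow> (nat \<Rightarrow> s2) \<Rightarrow> (nat \<Rightarrow> s2) \<Rightarrow> (real \<times> real) set" where
  "convI n \<alpha> p q = convex hull ((\<lambda>u. vpt n \<alpha> u p q) ` interval n p q)"

definition Eset :: "nat \<Rightarrow> (nat \<Rightarrow> real) \<Rightarrow> (nat \<Rightarrow> s2) \<Rightarrow> (nat \<Rightarrow> s2) \<Rightarrow> (nat \<Rightarrow> s2) set" where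
  "Eset n \<alpha> p q = {u \<in> interval n p q.
     vpt n \<alpha> u p q extreme_point_of convI n \<alpha> p q \<and>
     (\<forall>z \<in> convI n \<alpha> p q. fst (vpt n \<alpha> u p q) \<le> fst z \<and> snd (vpt n \<alpha> u p q) \<le> snd z
        \<longrightarrow> z = vpt n \<alpha> u p q)}"

definition cone :: "nat \<Rightarrow> (nat \<Rightarrow> real) \<Rightarrow> (nat \<Rightarrow> s2) \<Rightarrow> (nat \<Rightarrow> s2) \<Rightarrow> (nat \<Rightarrow> s2) \<Rightarrow> (real \<times> real) set" where
  "cone n \<alpha> u p q = {w. 0 \<le> fst w \<and> 0 \<le> snd w \<and>
     w \<bullet> vpt n \<alpha> u p q = (SUP z \<in> convI n \<alpha> p q. w \<bullet> z)}"

definition cone_measure :: "(real \<times> real) set \<Rightarrow> real" where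
  "cone_measure C = (THE m. \<exists>a b. 0 \<le> b \<and> b \<le> a \<and> a \<le> pi / 2 \<and>
      C = {(x, y). 0 \<le> x \<and> 0 \<le> y \<and> y * cos a \<le> x * sin a \<and> y * cos b \<ge> x * sin b} \<and>
      m = sin a / (sin a + cos a) - sin b / (sin b + cos b))"

(* fractional join as a formal real combination: element \<mapsto> its coefficient *)
definition frac_join :: "nat \<Rightarrow> (nat \<Rightarrow> real) \<Rightarrow> (nat \<Rightarrow> s2) \<Rightarrow> (nat \<Rightarrow> s2) \<Rightarrow> (nat \<Rightarrow> s2) \<Rightarrow> real" where
  "frac_join n \<alpha> p q = (\<lambda>x. \<Sum>u \<in> {u \<in> Eset n \<alpha> p q. u = x}. cone_measure (cone n \<alpha> u p q))"

end

theory Submission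
  imports Defs
begin

text \<open>
  Distances in the covering graph of \<open>S\<^sub>2\<^sup>n\<close> add up over coordinates, so \<open>I(p,q)\<close> is the product
  of coordinatewise intervals and \<open>\<langle>w, v(u;p,q)\<rangle>\<close> is a sum of coordinatewise gains. Hence a
  nonnegative \<open>w = (w\<^sub>1, w\<^sub>2)\<close> is maximised at \<open>u\<close> iff the ratio \<open>w\<^sub>2 / (w\<^sub>1 + w\<^sub>2)\<close> lies in an
  interval \<open>[L u, R u]\<close> cut out coordinatewise by the thresholds \<open>\<beta>\<^sub>j = \<alpha>\<^sub>j / (1 + \<alpha>\<^sub>j)\<close> and
  \<open>1 - \<beta>\<^sub>j\<close>. The measure \<open>[C]\<close> of a cone is the length of the interval of ratios it contains, so
  the coefficient of \<open>u\<close> in the fractional join is \<open>max 0 (R u - L u)\<close>: \<open>u\<close> is a maximal extreme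
  point when \<open>L u < R u\<close> (a strictly supporting functional exists), and only when \<open>L u \<le> R u\<close>
  (a nonnegative supporting functional exists by separation).
  Only points agreeing with \<open>p \<squnion>\<^sub>+ q\<close> off the coordinates where \<open>p\<close> and \<open>q\<close> have opposite signs,
  and nonzero there, can have \<open>L u < R u\<close>. For those, \<open>L u\<close> and \<open>R u\<close> are read off from the
  last \<open>+\<close> and the first \<open>-\<close> among the opposite coordinates, and \<open>R u - L u\<close> telescopes into
  the coefficients \<open>\<beta>\<^sub>i\<^sub>+\<^sub>1 - \<beta>\<^sub>i = 1/(1 + \<alpha>\<^sub>i) - 1/(1 + \<alpha>\<^sub>i\<^sub>+\<^sub>1)\<close> of \<open>p \<or>\<^sub>L\<^sup>i q\<close>, \<open>p \<or>\<^sub>R\<^sup>i q\<close> and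
  \<open>1 - 2\<beta>\<^sub>n = (1 - \<alpha>\<^sub>n)/(1 + \<alpha>\<^sub>n)\<close> of \<open>p \<squnion>\<^sup>n q\<close>.
\<close>

section \<open>Shortest paths in the covering graph\<close>

definition s2_dist :: "s2 \<Rightarrow> s2 \<Rightarrow> nat" where
  "s2_dist x y = (if x = y then 0 else if x = Zero \<or> y = Zero then 1 else 2)"

definition S2n_dist :: "nat \<Rightarrow> (nat \<Rightarrow> s2) \<Rightarrow> (nat \<Rightarrow> s2) \<Rightarrow> nat" where
  "S2n_dist n x y = (\<Sum>j=1..n. s2_dist (x j) (y j))"

definition s2_interval :: "s2 \<Rightarrow> s2 \<Rightarrow> s2 set" where
  "s2_interval a b = {c. s2_dist a c + s2_dist c b = s2_dist a b}"

lemma s2_dist_triangle: "s2_dist x z \<le> s2_dist x y + s2_dist y z"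
  by (cases x; cases y; cases z) (simp_all add: s2_dist_def)

lemma s2_dist_commute: "s2_dist x y = s2_dist y x"
  by (auto simp: s2_dist_def)

lemma s2_dist_self [simp]: "s2_dist x x = 0"
  by (simp add: s2_dist_def)

lemma S2n_dist_triangle: "S2n_dist n x z \<le> S2n_dist n x y + S2n_dist n y z"
  unfolding S2n_dist_def sum.distrib[symmetric] by (intro sum_mono s2_dist_triangle)

lemma S2n_dist_commute: "S2n_dist n x y = S2n_dist n y x"
  by (simp add: S2n_dist_def s2_dist_commute)

lemma S2n_dist_self [simp]: "S2n_dist n x x = 0"
  by (simp add: S2n_dist_def)

lemma S2n_outside: "x \<in> S2n n \<Longrightarrow> j \<notin> {1..n} \<Longrightarrow> x j = Zero"
  unfolding S2n_def by (cases "j = 0") auto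

lemma S2n_eqI:
  assumes "x \<in> S2n n" "y \<in> S2n n" "\<And>j. j \<in> {1..n} \<Longrightarrow> x j = y j"
  shows "x = y"
proof
  fix j show "x j = y j"
    using assms S2n_outside[of x n j] S2n_outside[of y n j] by (cases "j \<in> {1..n}") auto
qed

lemma S2n_update: "x \<in> S2n n \<Longrightarrow> j \<in> {1..n} \<Longrightarrow> x(j := c) \<in> S2n n"
  by (auto simp: S2n_def)

lemma S2n_dist_eq_0: "x \<in> S2n n \<Longrightarrow> y \<in> S2n n \<Longrightarrow> S2n_dist n x y = 0 \<Longrightarrow> x = y"
  by (rule S2n_eqI) (auto simp: S2n_dist_def s2_dist_def split: if_splits)

lemma sum_add_swap_point:
  fixes f g :: "'i \<Rightarrow> 'a::comm_monoid_add"
  assumes "finite A" "j \<in> A" "\<And>k. k \<in> A \<Longrightarrow> k \<noteq> j \<Longrightarrow> f k = g k"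
  shows "sum f A + g j = sum g A + f j"
proof -
  have "sum f (A - {j}) = sum g (A - {j})"
    using assms by (intro sum.cong) auto
  then show ?thesis
    using assms by (simp add: sum.remove ac_simps)
qed

lemma covers_single_coordinate:
  assumes "covers n x y"
  obtains j where "j \<in> {1..n}" "x j = Zero" "y j \<noteq> Zero" "\<And>k. k \<noteq> j \<Longrightarrow> x k = y k"
proof -
  from assms have x: "x \<in> S2n n" and y: "y \<in> S2n n" and xy: "\<And>i. s2_le (x i) (y i)" "x \<noteq> y"
    and no_between: "\<not> (\<exists>z. lt_n n x z \<and> lt_n n z y)"
    by (auto simp: covers_def lt_n_def leq_def)
  obtain j where j: "x j \<noteq> y j" using xy by auto
  have "x k = y k" if "k \<noteq> j" for k
  proof (rule ccontr)
    assume k: "x k \<noteq> y k"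
    define z where "z = x(k := y k)"
    have "k \<in> {1..n}" using k x y S2n_outside by metis
    then have "z \<in> S2n n" unfolding z_def by (rule S2n_update[OF x])
    moreover have "s2_le (x i) (z i)" "s2_le (z i) (y i)" for i
      using xy(1)[of i] by (auto simp: z_def s2_le_def)
    moreover have "x k \<noteq> z k" "z j \<noteq> y j" using j k \<open>k \<noteq> j\<close> by (auto simp: z_def)
    ultimately have "lt_n n x z \<and> lt_n n z y"
      using x y unfolding lt_n_def leq_def by metis
    then show False using no_between by blast
  qed
  moreover have "j \<in> {1..n}" using j x y S2n_outside by metis
  moreover have "x j = Zero" using xy(1)[of j] j by (auto simp: s2_le_def)
  ultimately show ?thesis using that j by auto
qed

lemma adj_dist: "adj n x y \<Longrightarrow> S2n_dist n x y = 1"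
proof -
  have "S2n_dist n x y = 1" if xy: "covers n x y" for x y
  proof -
    obtain j where j: "j \<in> {1..n}" "x j = Zero" "y j \<noteq> Zero" "\<And>k. k \<noteq> j \<Longrightarrow> x k = y k"
      using covers_single_coordinate[OF xy] by blast
    then have "S2n_dist n x y = (\<Sum>k=1..n. if k = j then 1 else 0)"
      unfolding S2n_dist_def by (intro sum.cong) (auto simp: s2_dist_def)
    then show ?thesis using j by simp
  qed
  then show "adj n x y \<Longrightarrow> S2n_dist n x y = 1"
    by (metis adj_def S2n_dist_commute)
qed

lemma covers_intro:
  assumes "x \<in> S2n n" "y \<in> S2n n" "x j = Zero" "y j \<noteq> Zero" "\<And>k. k \<noteq> j \<Longrightarrow> x k = y k"
  shows "covers n x y"
proof -
  have "z = x \<or> z = y" if "leq x z" "leq z y" for z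
  proof -
    have zk: "z k = x k" if "k \<noteq> j" for k
      using \<open>leq x z\<close> \<open>leq z y\<close> assms(5)[OF that] unfolding leq_def s2_le_def by metis
    have "z j = x j \<or> z j = y j"
      using \<open>leq z y\<close> assms(3) by (auto simp: leq_def s2_le_def)
    then show ?thesis
    proof
      assume "z j = x j" then have "z = x" using zk by (intro ext) (metis)
      then show ?thesis ..
    next
      assume "z j = y j" then have "z = y" using zk assms(5) by (intro ext) (metis)
      then show ?thesis ..
    qed
  qed
  moreover have "leq x y" unfolding leq_def s2_le_def using assms(3,5) by metis
  moreover have "x \<noteq> y" using assms(3,4) by auto
  ultimately show ?thesis using assms by (auto simp: covers_def lt_n_def)
qed

lemma is_walk_singleton: "is_walk n [a] p q \<longleftrightarrow> a = p \<and> a = q \<and> a \<in> S2n n"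
  by (auto simp: is_walk_def)

lemma is_walk_Cons_Cons:
  "is_walk n (a # b # r) p q \<longleftrightarrow> a = p \<and> a \<in> S2n n \<and> adj n a b \<and> is_walk n (b # r) b q"
  unfolding is_walk_def by (auto simp: less_Suc_eq_0_disj)

lemma walk_length_ge:
  assumes "is_walk n xs p q" "u \<in> set xs"
  shows "S2n_dist n p u + S2n_dist n u q + 1 \<le> length xs"
  using assms
proof (induction xs arbitrary: p u)
  case Nil then show ?case by (simp add: is_walk_def)
next
  case (Cons a xs)
  show ?case
  proof (cases xs)
    case Nil then show ?thesis using Cons.prems by (auto simp: is_walk_singleton)
  next
    case (Cons b r)
    with Cons.prems have w: "a = p" "adj n p b" "is_walk n xs b q"
      by (auto simp: is_walk_Cons_Cons)
    have "b \<in> set xs" using Cons by simp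
    from Cons.IH[OF w(3) this] have b: "S2n_dist n b q + 1 \<le> length xs" by simp
    have pb: "S2n_dist n p b = 1" using adj_dist[OF w(2)] .
    show ?thesis
    proof (cases "u = a")
      case True
      have "S2n_dist n p q \<le> S2n_dist n p b + S2n_dist n b q" by (rule S2n_dist_triangle)
      then show ?thesis using True w(1) b pb by simp
    next
      case False
      then have "u \<in> set xs" using Cons.prems(2) by simp
      from Cons.IH[OF w(3) this] have "S2n_dist n b u + S2n_dist n u q + 1 \<le> length xs" .
      moreover have "S2n_dist n p u \<le> S2n_dist n p b + S2n_dist n b u" by (rule S2n_dist_triangle)
      ultimately show ?thesis using pb by simp
    qed
  qed
qed

lemma walk_exists:
  "x \<in> S2n n \<Longrightarrow> y \<in> S2n n \<Longrightarrow> \<exists>xs. is_walk n xs x y \<and> length xs = S2n_dist n x y + 1"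
proof (induction "S2n_dist n x y" arbitrary: x)
  case 0
  then have "x = y" using S2n_dist_eq_0 by metis
  then show ?case using 0 by (intro exI[of _ "[x]"]) (simp add: is_walk_singleton)
next
  case (Suc k)
  have "x \<noteq> y" using Suc.hyps(2) by auto
  then obtain j where j: "x j \<noteq> y j" by auto
  have jn: "j \<in> {1..n}" using j Suc.prems S2n_outside by metis
  define x' where "x' = x(j := if x j = Zero then y j else Zero)"
  have x': "x' \<in> S2n n" unfolding x'_def by (rule S2n_update[OF Suc.prems(1) jn])
  have "adj n x x'"
  proof (cases "x j = Zero")
    case True
    then have "covers n x x'"
      using j Suc.prems x' by (intro covers_intro[where j = j]) (auto simp: x'_def)
    then show ?thesis by (simp add: adj_def)
  next
    case False
    then have "covers n x' x"
      using j Suc.prems x' by (intro covers_intro[where j = j]) (auto simp: x'_def)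
    then show ?thesis by (simp add: adj_def)
  qed
  have "S2n_dist n x' y + s2_dist (x j) (y j) = S2n_dist n x y + s2_dist (x' j) (y j)"
    unfolding S2n_dist_def using jn by (intro sum_add_swap_point) (auto simp: x'_def)
  moreover have "s2_dist (x j) (y j) = s2_dist (x' j) (y j) + 1"
    using j by (cases "x j"; cases "y j") (auto simp: x'_def s2_dist_def)
  ultimately have "k = S2n_dist n x' y" using Suc.hyps(2) by simp
  from Suc.hyps(1)[OF this x' Suc.prems(2)] obtain xs
    where xs: "is_walk n xs x' y" "length xs = S2n_dist n x' y + 1" by blast
  then obtain r where "xs = x' # r" by (cases xs) (auto simp: is_walk_def)
  then have "is_walk n (x # xs) x y"
    using xs \<open>adj n x x'\<close> Suc.prems by (simp add: is_walk_Cons_Cons)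
  then show ?case using xs \<open>k = S2n_dist n x' y\<close> Suc.hyps(2) by (intro exI[of _ "x # xs"]) simp
qed

lemma walk_append:
  "is_walk n w1 p u \<Longrightarrow> is_walk n w2 u q \<Longrightarrow> is_walk n (w1 @ tl w2) p q"
proof (induction w1 arbitrary: p)
  case Nil then show ?case by (simp add: is_walk_def)
next
  case (Cons a w1)
  show ?case
  proof (cases w1)
    case Nil
    then show ?thesis using Cons.prems by (cases w2) (auto simp: is_walk_def)
  next
    case (Cons b r)
    with Cons.prems show ?thesis
      using Cons.IH[of b] by (auto simp: is_walk_Cons_Cons)
  qed
qed

lemma interval_eq_dist:
  assumes p: "p \<in> S2n n" and q: "q \<in> S2n n"
  shows "interval n p q = {u \<in> S2n n. S2n_dist n p u + S2n_dist n u q = S2n_dist n p q}"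
proof (intro set_eqI iffI)
  fix u assume "u \<in> interval n p q"
  then obtain xs where xs: "is_shortest_path n xs p q" "u \<in> set xs"
    by (auto simp: interval_def)
  obtain ys where "is_walk n ys p q" "length ys = S2n_dist n p q + 1"
    using walk_exists[OF p q] by blast
  then have "S2n_dist n p u + S2n_dist n u q \<le> S2n_dist n p q"
    using xs walk_length_ge[of n xs p q u] by (fastforce simp: is_shortest_path_def)
  moreover have "S2n_dist n p q \<le> S2n_dist n p u + S2n_dist n u q"
    by (rule S2n_dist_triangle)
  moreover have "u \<in> S2n n"
    using xs by (auto simp: is_shortest_path_def is_walk_def)
  ultimately show "u \<in> {u \<in> S2n n. S2n_dist n p u + S2n_dist n u q = S2n_dist n p q}"
    by simp
next
  fix u assume u: "u \<in> {u \<in> S2n n. S2n_dist n p u + S2n_dist n u q = S2n_dist n p q}"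
  obtain w1 where w1: "is_walk n w1 p u" "length w1 = S2n_dist n p u + 1"
    using walk_exists p u by blast
  obtain w2 where w2: "is_walk n w2 u q" "length w2 = S2n_dist n u q + 1"
    using walk_exists q u by blast
  have w: "is_walk n (w1 @ tl w2) p q"
    using walk_append w1 w2 by blast
  have "length (w1 @ tl w2) = S2n_dist n p q + 1"
    using w1 w2 u by simp
  moreover have "S2n_dist n p q + 1 \<le> length ys" if "is_walk n ys p q" for ys
    using walk_length_ge[OF that, of p] that hd_in_set[of ys] by (auto simp: is_walk_def)
  ultimately have "is_shortest_path n (w1 @ tl w2) p q"
    using w by (simp add: is_shortest_path_def)
  moreover have "u \<in> set (w1 @ tl w2)" using w1 by (auto simp: is_walk_def)
  ultimately show "u \<in> interval n p q" by (auto simp: interval_def)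
qed

lemma interval_eq_coordinatewise:
  assumes "p \<in> S2n n" "q \<in> S2n n"
  shows "interval n p q = {u \<in> S2n n. \<forall>j\<in>{1..n}. u j \<in> s2_interval (p j) (q j)}"
proof -
  have "S2n_dist n p u + S2n_dist n u q = S2n_dist n p q
        \<longleftrightarrow> (\<forall>j\<in>{1..n}. u j \<in> s2_interval (p j) (q j))" for u
  proof
    assume "S2n_dist n p u + S2n_dist n u q = S2n_dist n p q"
    then have "(\<Sum>j=1..n. s2_dist (p j) (q j)) = (\<Sum>j=1..n. s2_dist (p j) (u j) + s2_dist (u j) (q j))"
      by (simp add: S2n_dist_def sum.distrib)
    from sum_mono_inv[OF this s2_dist_triangle]
    show "\<forall>j\<in>{1..n}. u j \<in> s2_interval (p j) (q j)"
      by (simp add: s2_interval_def)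
  next
    assume "\<forall>j\<in>{1..n}. u j \<in> s2_interval (p j) (q j)"
    then show "S2n_dist n p u + S2n_dist n u q = S2n_dist n p q"
      unfolding S2n_dist_def sum.distrib[symmetric]
      by (intro sum.cong) (auto simp: s2_interval_def)
  qed
  then show ?thesis using interval_eq_dist[OF assms] by auto
qed

section \<open>Linear functionals on the interval\<close>

definition coord_gain :: "(nat \<Rightarrow> real) \<Rightarrow> nat \<Rightarrow> real \<times> real \<Rightarrow> s2 \<Rightarrow> s2 \<Rightarrow> s2 \<Rightarrow> real" where
  "coord_gain \<alpha> j w pj qj c =
     fst w * (v_coord \<alpha> j (s2_meet c pj) - v_coord \<alpha> j (s2_meet pj qj))
   + snd w * (v_coord \<alpha> j (s2_meet c qj) - v_coord \<alpha> j (s2_meet pj qj))"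

lemma inner_vpt: "w \<bullet> vpt n \<alpha> u p q = (\<Sum>j=1..n. coord_gain \<alpha> j w (p j) (q j) (u j))"
  by (cases w) (simp add: vpt_def val_def meet_def coord_gain_def inner_prod_def
      sum_subtractf[symmetric] sum_distrib_left sum.distrib[symmetric])

text \<open>
  The entries of \<open>coord_bounds\<close> are the ratios \<open>snd w / (fst w + snd w)\<close> at which the optimal
  coordinate value changes. For instance, if \<open>p j = Minus\<close>, \<open>q j = Plus\<close> and \<open>w = (1 - s, s)\<close>, the
  gains of \<open>Minus\<close>, \<open>Zero\<close>, \<open>Plus\<close> are \<open>(1 - s) \<alpha> j\<close>, \<open>0\<close>, \<open>s\<close>, and \<open>(1 - s) \<alpha> j \<le> s\<close> iff
  \<open>\<alpha> j / (1 + \<alpha> j) \<le> s\<close>.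
\<close>

definition coord_bounds :: "real \<Rightarrow> s2 \<Rightarrow> s2 \<Rightarrow> s2 \<Rightarrow> real \<times> real" where
  "coord_bounds a pj qj c =
    (if pj = Minus \<and> qj = Plus then (case c of Minus \<Rightarrow> (0, a) | Plus \<Rightarrow> (a, 1) | Zero \<Rightarrow> (1, 0))
     else if pj = Plus \<and> qj = Minus then (case c of Plus \<Rightarrow> (0, 1 - a) | Minus \<Rightarrow> (1 - a, 1) | Zero \<Rightarrow> (1, 0))
     else if qj = Zero \<and> pj \<noteq> Zero then (if c = Zero then (1, 1) else (0, 1))
     else if pj = Zero \<and> qj \<noteq> Zero then (if c = Zero then (0, 0) else (0, 1))
     else (0, 1))"

lemma coord_gain_max_iff:
  fixes w :: "real \<times> real"
  assumes \<alpha>: "0 < \<alpha> j" "\<alpha> j \<le> 1" and w: "0 \<le> fst w" "0 \<le> snd w" and c: "c \<in> s2_interval pj qj"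
  shows "(\<forall>c'\<in>s2_interval pj qj. coord_gain \<alpha> j w pj qj c' \<le> coord_gain \<alpha> j w pj qj c) \<longleftrightarrow>
    fst (coord_bounds (\<alpha> j / (1 + \<alpha> j)) pj qj c) * (fst w + snd w) \<le> snd w \<and>
    snd w \<le> snd (coord_bounds (\<alpha> j / (1 + \<alpha> j)) pj qj c) * (fst w + snd w)"
proof -
  obtain w1 w2 where ww: "w = (w1, w2)" by (cases w)
  have pos: "1 + \<alpha> j > 0" using \<alpha> by simp
  then have e: "w2 \<le> \<alpha> j / (1 + \<alpha> j) * (w1 + w2) \<longleftrightarrow> w2 \<le> w1 * \<alpha> j"
    "\<alpha> j / (1 + \<alpha> j) * (w1 + w2) \<le> w2 \<longleftrightarrow> w1 * \<alpha> j \<le> w2"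
    "w2 \<le> (1 - \<alpha> j / (1 + \<alpha> j)) * (w1 + w2) \<longleftrightarrow> w2 * \<alpha> j \<le> w1"
    "(1 - \<alpha> j / (1 + \<alpha> j)) * (w1 + w2) \<le> w2 \<longleftrightarrow> w1 \<le> w2 * \<alpha> j"
    by (simp_all add: field_simps)
  have all_s2: "(\<forall>c. P c) \<longleftrightarrow> P Minus \<and> P Zero \<and> P Plus" for P
    by (metis s2.exhaust)
  show ?thesis
    using c w \<alpha> pos unfolding ww
    apply (cases pj; cases qj; cases c)
    apply (simp_all add: s2_interval_def s2_dist_def coord_gain_def coord_bounds_def s2_meet_def
        v_coord_def Ball_def all_s2 e mult_le_0_iff zero_le_mult_iff)
    apply (auto simp: field_simps)
    done
qed

lemma coord_gain_strict_max:
  assumes "0 < \<alpha> j" "\<alpha> j \<le> 1" "0 < s" "s < 1" "c \<in> s2_interval pj qj"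
    and "fst (coord_bounds (\<alpha> j / (1 + \<alpha> j)) pj qj c) < s"
    and "s < snd (coord_bounds (\<alpha> j / (1 + \<alpha> j)) pj qj c)"
    and "c' \<in> s2_interval pj qj" "c' \<noteq> c"
  shows "coord_gain \<alpha> j (1 - s, s) pj qj c' < coord_gain \<alpha> j (1 - s, s) pj qj c"
proof -
  have "1 + \<alpha> j > 0" using assms(1) by simp
  with assms show ?thesis
    apply (cases pj; cases qj; cases c; cases c')
    apply (simp_all add: s2_interval_def s2_dist_def coord_gain_def coord_bounds_def s2_meet_def
        v_coord_def)
    apply (auto simp: field_simps)
    done
qed

section \<open>Maximisers of linear functionals on convex hulls\<close>

lemma inner_le_on_convex_hull:
  fixes w :: "'a::real_inner"
  assumes "\<And>u. u \<in> S \<Longrightarrow> w \<bullet> u \<le> b" "z \<in> convex hull S"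
  shows "w \<bullet> z \<le> b"
proof -
  have "convex hull S \<subseteq> {z. w \<bullet> z \<le> b}"
    using assms(1) by (intro hull_minimal) (auto simp: convex_halfspace_le)
  then show ?thesis using assms(2) by auto
qed

lemma inner_eq_SUP_convex_hull_iff:
  fixes w :: "'a::real_inner"
  assumes "finite S" "x \<in> S"
  shows "w \<bullet> x = (SUP z\<in>convex hull S. w \<bullet> z) \<longleftrightarrow> (\<forall>u\<in>S. w \<bullet> u \<le> w \<bullet> x)"
proof
  assume max: "w \<bullet> x = (SUP z\<in>convex hull S. w \<bullet> z)"
  have "bdd_above ((\<bullet>) w ` (convex hull S))"
    using assms inner_le_on_convex_hull[of S w "Max ((\<bullet>) w ` S)"] by (intro bdd_aboveI2) auto
  then show "\<forall>u\<in>S. w \<bullet> u \<le> w \<bullet> x"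
    unfolding max by (auto intro!: cSUP_upper hull_inc)
next
  assume "\<forall>u\<in>S. w \<bullet> u \<le> w \<bullet> x"
  then show "w \<bullet> x = (SUP z\<in>convex hull S. w \<bullet> z)"
    using assms(2) inner_le_on_convex_hull[of S w "w \<bullet> x"]
    by (intro cSup_eq_maximum[symmetric]) (auto intro: hull_inc)
qed

lemma convex_halfspace_le_boundary_singleton:
  fixes w :: "'a::real_inner"
  shows "convex {z. w \<bullet> z \<le> b \<and> (w \<bullet> z = b \<longrightarrow> z = v)}"
  unfolding convex_def
proof (intro ballI allI impI)
  fix x y and s t :: real
  assume x: "x \<in> {z. w \<bullet> z \<le> b \<and> (w \<bullet> z = b \<longrightarrow> z = v)}"
    and y: "y \<in> {z. w \<bullet> z \<le> b \<and> (w \<bullet> z = b \<longrightarrow> z = v)}"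
    and st: "0 \<le> s" "0 \<le> t" "s + t = 1"
  have sum: "w \<bullet> (s *\<^sub>R x + t *\<^sub>R y) = s * (w \<bullet> x) + t * (w \<bullet> y)"
    by (simp add: inner_add_right)
  have le: "s * (w \<bullet> x) \<le> s * b" "t * (w \<bullet> y) \<le> t * b"
    using x y st by (auto intro: mult_left_mono)
  have b: "s * b + t * b = b" using st by (metis distrib_right mult_1)
  have "s *\<^sub>R x + t *\<^sub>R y = v" if "w \<bullet> (s *\<^sub>R x + t *\<^sub>R y) = b"
  proof -
    have "s * (w \<bullet> x) = s * b" "t * (w \<bullet> y) = t * b"
      using that sum le b by linarith+
    then have "(s = 0 \<or> x = v) \<and> (t = 0 \<or> y = v)" using x y by auto
    then show ?thesis using st by (auto simp: scaleR_left_distrib[symmetric])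
  qed
  moreover have "w \<bullet> (s *\<^sub>R x + t *\<^sub>R y) \<le> b" using sum le b by linarith
  ultimately show "s *\<^sub>R x + t *\<^sub>R y \<in> {z. w \<bullet> z \<le> b \<and> (w \<bullet> z = b \<longrightarrow> z = v)}" by simp
qed

lemma strict_maximizer_convex_hull:
  fixes w :: "'a::real_inner"
  assumes "x \<in> S" "\<And>u. u \<in> S \<Longrightarrow> u \<noteq> x \<Longrightarrow> w \<bullet> u < w \<bullet> x" "z \<in> convex hull S"
  shows "w \<bullet> z \<le> w \<bullet> x" "w \<bullet> z = w \<bullet> x \<Longrightarrow> z = x"
proof -
  have "convex hull S \<subseteq> {z. w \<bullet> z \<le> w \<bullet> x \<and> (w \<bullet> z = w \<bullet> x \<longrightarrow> z = x)}"
    using assms(1,2) by (intro hull_minimal convex_halfspace_le_boundary_singleton) force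
  then show "w \<bullet> z \<le> w \<bullet> x" "w \<bullet> z = w \<bullet> x \<Longrightarrow> z = x" using assms(3) by auto
qed

lemma strict_maximizer_extreme_point:
  fixes w :: "'a::real_inner"
  assumes "x \<in> S" "\<And>u. u \<in> S \<Longrightarrow> u \<noteq> x \<Longrightarrow> w \<bullet> u < w \<bullet> x"
  shows "x extreme_point_of convex hull S"
proof -
  have "convex hull S \<inter> {z. w \<bullet> z = w \<bullet> x} = {x}"
    using strict_maximizer_convex_hull[OF assms] hull_inc[OF assms(1)] by blast
  moreover have "(convex hull S \<inter> {z. w \<bullet> z = w \<bullet> x}) face_of convex hull S"
    using strict_maximizer_convex_hull[OF assms]
    by (intro face_of_Int_supporting_hyperplane_le) auto
  ultimately show ?thesis by (simp add: face_of_singleton)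
qed

lemma le_of_le_add_pos_mult:
  fixes x y c :: real
  assumes "\<And>d. 0 < d \<Longrightarrow> x \<le> y + c * d"
  shows "x \<le> y"
proof (cases "c \<le> 0")
  case True then show ?thesis using assms[of 1] by simp
next
  case False
  show ?thesis
  proof (rule field_le_epsilon)
    fix e :: real assume "0 < e"
    then show "x \<le> y + e" using assms[of "e / c"] False by simp
  qed
qed

lemma nonneg_of_lower_bound_pos_mult:
  fixes k c :: real
  assumes "\<And>d. 0 < d \<Longrightarrow> k \<le> c * d"
  shows "0 \<le> c"
proof (rule ccontr)
  assume c: "\<not> 0 \<le> c"
  then have "k \<le> c * ((\<bar>k\<bar> + 1) / - c)" by (intro assms) (simp add: field_simps)
  also have "\<dots> = - (\<bar>k\<bar> + 1)" using c by simp
  finally show False by linarith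
qed

lemma nonneg_supporting_functional:
  fixes C :: "(real \<times> real) set"
  assumes "convex C" "v \<in> C" "\<And>z. z \<in> C \<Longrightarrow> \<not> (fst v < fst z \<and> snd v < snd z)"
  obtains w where "0 \<le> fst w" "0 \<le> snd w" "w \<noteq> 0" "\<And>z. z \<in> C \<Longrightarrow> w \<bullet> z \<le> w \<bullet> v"
proof -
  define T where "T = {z :: real \<times> real. fst v < fst z \<and> snd v < snd z}"
  have "T = {z. (1, 0) \<bullet> z > fst v} \<inter> {z. (0, 1) \<bullet> z > snd v}"
    by (auto simp: T_def inner_prod_def)
  then have "convex T" by (simp add: convex_Int convex_halfspace_gt)
  moreover have "(fst v + 1, snd v + 1) \<in> T" by (simp add: T_def)
  moreover have "C \<inter> T = {}" using assms(3) by (auto simp: T_def)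
  ultimately obtain a b where a: "a \<noteq> 0" "\<And>z. z \<in> C \<Longrightarrow> a \<bullet> z \<le> b" "\<And>z. z \<in> T \<Longrightarrow> b \<le> a \<bullet> z"
    using separating_hyperplane_sets[OF assms(1), of T] assms(2) by blast
  have shift: "b \<le> a \<bullet> v + fst a * d + snd a * e" if "0 < d" "0 < e" for d e
  proof -
    have "(fst v + d, snd v + e) \<in> T" using that by (simp add: T_def)
    from a(3)[OF this] show ?thesis by (simp add: inner_prod_def algebra_simps)
  qed
  have av: "a \<bullet> v \<le> b" using a(2) assms(2) .
  have "0 \<le> fst a"
  proof (rule nonneg_of_lower_bound_pos_mult)
    fix d :: real assume "0 < d"
    then show "- snd a \<le> fst a * d" using shift[of d 1] av by simp
  qed
  moreover have "0 \<le> snd a"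
  proof (rule nonneg_of_lower_bound_pos_mult)
    fix e :: real assume "0 < e"
    then show "- fst a \<le> snd a * e" using shift[of 1 e] av by simp
  qed
  moreover have "b \<le> a \<bullet> v"
  proof (rule le_of_le_add_pos_mult)
    fix d :: real assume "0 < d"
    then show "b \<le> a \<bullet> v + (fst a + snd a) * d" using shift[of d d] by (simp add: algebra_simps)
  qed
  ultimately show ?thesis using that a(1,2) by (meson order_trans)
qed

section \<open>The measure of a cone\<close>

definition ratio_cone :: "real \<Rightarrow> real \<Rightarrow> (real \<times> real) set" where
  "ratio_cone l r = {(w1, w2). 0 \<le> w1 \<and> 0 \<le> w2 \<and> l * (w1 + w2) \<le> w2 \<and> w2 \<le> r * (w1 + w2)}"

definition angle_ratio :: "real \<Rightarrow> real" where
  "angle_ratio t = sin t / (sin t + cos t)"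

lemma sin_plus_cos_pos:
  assumes "0 \<le> t" "t \<le> pi / 2"
  shows "0 < sin t + cos t"
proof (cases "t = pi / 2")
  case False
  then have "0 < cos t" using assms by (intro cos_gt_zero_pi) auto
  moreover have "0 \<le> sin t" using assms by (intro sin_ge_zero) auto
  ultimately show ?thesis by simp
next
  case True then show ?thesis unfolding True by simp
qed

lemma angle_ratio_le_iff:
  assumes "0 \<le> t" "t \<le> pi / 2"
  shows "y \<le> angle_ratio t * (x + y) \<longleftrightarrow> y * cos t \<le> x * sin t"
    and "angle_ratio t * (x + y) \<le> y \<longleftrightarrow> x * sin t \<le> y * cos t"
proof -
  have pos: "0 < sin t + cos t" using sin_plus_cos_pos[OF assms] .
  have "y \<le> angle_ratio t * (x + y) \<longleftrightarrow> y * (sin t + cos t) \<le> sin t * (x + y)"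
    unfolding angle_ratio_def using pos by (simp add: field_simps)
  then show "y \<le> angle_ratio t * (x + y) \<longleftrightarrow> y * cos t \<le> x * sin t"
    by (simp add: algebra_simps)
  have "angle_ratio t * (x + y) \<le> y \<longleftrightarrow> sin t * (x + y) \<le> y * (sin t + cos t)"
    unfolding angle_ratio_def using pos by (simp add: field_simps)
  then show "angle_ratio t * (x + y) \<le> y \<longleftrightarrow> x * sin t \<le> y * cos t"
    by (simp add: algebra_simps)
qed

lemma angle_ratio_bounds:
  assumes "0 \<le> t" "t \<le> pi / 2"
  shows "0 \<le> angle_ratio t" "angle_ratio t \<le> 1"
proof -
  have "0 < sin t + cos t" "0 \<le> sin t" "0 \<le> cos t"
    using sin_plus_cos_pos[OF assms] assms by (auto intro: sin_ge_zero cos_ge_zero)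
  then show "0 \<le> angle_ratio t" "angle_ratio t \<le> 1"
    unfolding angle_ratio_def by simp_all
qed

lemma angle_ratio_mono:
  assumes "0 \<le> s" "s \<le> t" "t \<le> pi / 2"
  shows "angle_ratio s \<le> angle_ratio t"
proof -
  have "0 \<le> sin (t - s)" using assms by (intro sin_ge_zero) auto
  then have "sin s * (sin t + cos t) \<le> sin t * (sin s + cos s)"
    by (simp add: sin_diff algebra_simps)
  moreover have "0 < sin s + cos s" "0 < sin t + cos t"
    using sin_plus_cos_pos assms by auto
  ultimately show ?thesis
    unfolding angle_ratio_def by (simp add: divide_simps)
qed

lemma angle_ratio_surj:
  assumes "0 \<le> r" "r \<le> 1"
  obtains t where "0 \<le> t" "t \<le> pi / 2" "angle_ratio t = r"
proof -
  have "\<forall>t\<in>{0..pi/2}. sin t + cos t \<noteq> 0" using sin_plus_cos_pos by fastforce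
  then have "continuous_on {0..pi/2} angle_ratio"
    unfolding angle_ratio_def by (intro continuous_intros)
  moreover have "angle_ratio 0 = 0" "angle_ratio (pi / 2) = 1"
    by (simp_all add: angle_ratio_def)
  ultimately show ?thesis
    using IVT'[of angle_ratio 0 r "pi / 2"] assms that by auto
qed

lemma sector_eq_ratio_cone:
  assumes "0 \<le> b" "b \<le> a" "a \<le> pi / 2"
  shows "{(x, y). 0 \<le> x \<and> 0 \<le> y \<and> y * cos a \<le> x * sin a \<and> y * cos b \<ge> x * sin b}
       = ratio_cone (angle_ratio b) (angle_ratio a)"
proof -
  have "y * cos a \<le> x * sin a \<longleftrightarrow> y \<le> angle_ratio a * (x + y)"
    and "x * sin b \<le> y * cos b \<longleftrightarrow> angle_ratio b * (x + y) \<le> y" for x y :: real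
    using angle_ratio_le_iff[of a] angle_ratio_le_iff[of b] assms by simp_all
  then show ?thesis unfolding ratio_cone_def by auto
qed

lemma ratio_cone_inject:
  assumes "0 \<le> l" "l \<le> r" "r \<le> 1" "0 \<le> l'" "r' \<le> 1" "ratio_cone l r = ratio_cone l' r'"
  shows "l = l'" "r = r'"
proof -
  have mem: "(1 - s, s) \<in> ratio_cone l r \<longleftrightarrow> l \<le> s \<and> s \<le> r" if "0 \<le> s" "s \<le> 1" for s l r
    using that by (simp add: ratio_cone_def)
  have "(1 - l, l) \<in> ratio_cone l' r'" "(1 - r, r) \<in> ratio_cone l' r'"
    using mem[of l l r] mem[of r l r] assms by simp_all
  then have l'l: "l' \<le> l" and rr': "r \<le> r'"
    using mem[of l l' r'] mem[of r l' r'] assms by simp_all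
  then have "(1 - l', l') \<in> ratio_cone l r" "(1 - r', r') \<in> ratio_cone l r"
    using mem[of l' l' r'] mem[of r' l' r'] assms by simp_all
  then have "l \<le> l'" "r' \<le> r"
    using mem[of l' l r] mem[of r' l r] assms l'l rr' by simp_all
  with l'l rr' show "l = l'" "r = r'" by simp_all
qed

lemma cone_measure_ratio_cone:
  assumes "0 \<le> l" "l \<le> r" "r \<le> 1"
  shows "cone_measure (ratio_cone l r) = r - l"
  unfolding cone_measure_def
proof (rule the_equality)
  obtain a where a: "0 \<le> a" "a \<le> pi / 2" "angle_ratio a = r"
    using angle_ratio_surj[of r] assms by auto
  obtain b where b: "0 \<le> b" "b \<le> a" "angle_ratio b = l"
  proof (cases "l = r")
    case True then show ?thesis using that a by auto
  next
    case False
    obtain b where b: "0 \<le> b" "b \<le> pi / 2" "angle_ratio b = l"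
      using angle_ratio_surj[of l] assms by auto
    have "b \<le> a"
    proof (rule ccontr)
      assume "\<not> b \<le> a"
      then have "r \<le> l" using angle_ratio_mono[of a b] a b by simp
      then show False using assms False by simp
    qed
    then show ?thesis using that b by auto
  qed
  have "ratio_cone l r =
      {(x, y). 0 \<le> x \<and> 0 \<le> y \<and> y * cos a \<le> x * sin a \<and> y * cos b \<ge> x * sin b}"
    using sector_eq_ratio_cone[of b a] a b by simp
  moreover have "r - l = sin a / (sin a + cos a) - sin b / (sin b + cos b)"
    using a b by (simp add: angle_ratio_def)
  ultimately show "\<exists>a b. 0 \<le> b \<and> b \<le> a \<and> a \<le> pi / 2 \<and>
      ratio_cone l r = {(x, y). 0 \<le> x \<and> 0 \<le> y \<and> y * cos a \<le> x * sin a \<and> y * cos b \<ge> x * sin b} \<and>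
      r - l = sin a / (sin a + cos a) - sin b / (sin b + cos b)"
    using a b by blast
next
  fix m
  assume "\<exists>a b. 0 \<le> b \<and> b \<le> a \<and> a \<le> pi / 2 \<and>
      ratio_cone l r = {(x, y). 0 \<le> x \<and> 0 \<le> y \<and> y * cos a \<le> x * sin a \<and> y * cos b \<ge> x * sin b} \<and>
      m = sin a / (sin a + cos a) - sin b / (sin b + cos b)"
  then obtain a b where ab: "0 \<le> b" "b \<le> a" "a \<le> pi / 2"
    and sector: "ratio_cone l r =
      {(x, y). 0 \<le> x \<and> 0 \<le> y \<and> y * cos a \<le> x * sin a \<and> y * cos b \<ge> x * sin b}"
    and m: "m = sin a / (sin a + cos a) - sin b / (sin b + cos b)"
    by blast
  have cone: "ratio_cone l r = ratio_cone (angle_ratio b) (angle_ratio a)"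
    using sector sector_eq_ratio_cone[OF ab] by simp
  have "l = angle_ratio b" "r = angle_ratio a"
    using ratio_cone_inject[OF assms _ _ cone] angle_ratio_bounds[of a] angle_ratio_bounds[of b] ab
    by simp_all
  then show "m = r - l" using m by (simp add: angle_ratio_def)
qed

section \<open>Supporting cones of the interval\<close>

lemma Max_insert_0_mult_le_iff:
  fixes S :: "real set"
  assumes "finite S" "0 \<le> c" "0 \<le> y"
  shows "Max (insert 0 S) * c \<le> y \<longleftrightarrow> (\<forall>l\<in>S. l * c \<le> y)"
proof
  assume "Max (insert 0 S) * c \<le> y"
  moreover have "l * c \<le> Max (insert 0 S) * c" if "l \<in> S" for l
    using assms that by (intro mult_right_mono) simp_all
  ultimately show "\<forall>l\<in>S. l * c \<le> y" by (meson order_trans)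
next
  assume "\<forall>l\<in>S. l * c \<le> y"
  moreover have "Max (insert 0 S) \<in> insert 0 S" using assms by (intro Max_in) auto
  ultimately show "Max (insert 0 S) * c \<le> y" using assms by auto
qed

lemma le_Min_insert_1_mult_iff:
  fixes S :: "real set"
  assumes "finite S" "0 \<le> c" "y \<le> c"
  shows "y \<le> Min (insert 1 S) * c \<longleftrightarrow> (\<forall>r\<in>S. y \<le> r * c)"
proof
  assume "y \<le> Min (insert 1 S) * c"
  moreover have "Min (insert 1 S) * c \<le> r * c" if "r \<in> S" for r
    using assms that by (intro mult_right_mono) simp_all
  ultimately show "\<forall>r\<in>S. y \<le> r * c" by (meson order_trans)
next
  assume "\<forall>r\<in>S. y \<le> r * c"
  moreover have "Min (insert 1 S) \<in> insert 1 S" using assms by (intro Min_in) auto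
  ultimately show "y \<le> Min (insert 1 S) * c" using assms by auto
qed

locale frac_join_setting =
  fixes n :: nat and \<alpha> :: "nat \<Rightarrow> real" and p q :: "nat \<Rightarrow> s2"
  assumes alpha_0: "\<alpha> 0 = 0"
    and alpha_1_pos: "n \<ge> 1 \<Longrightarrow> 0 < \<alpha> 1"
    and alpha_Suc: "\<And>j. 1 \<le> j \<Longrightarrow> j < n \<Longrightarrow> \<alpha> j \<le> \<alpha> (Suc j)"
    and alpha_n_le_1: "\<alpha> n \<le> 1"
    and p: "p \<in> S2n n" and q: "q \<in> S2n n"
begin

lemma alpha_mono: "i \<le> j \<Longrightarrow> j \<le> n \<Longrightarrow> \<alpha> i \<le> \<alpha> j"
proof (induction j rule: dec_induct)
  case (step k)
  then have "\<alpha> k \<le> \<alpha> (Suc k)"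
    using alpha_Suc[of k] alpha_1_pos alpha_0 by (cases "k = 0") auto
  then show ?case using step by simp
qed simp

lemma alpha_pos: "j \<in> {1..n} \<Longrightarrow> 0 < \<alpha> j"
  using alpha_mono[of 1 j] alpha_1_pos by auto

lemma alpha_bounds: "j \<le> n \<Longrightarrow> 0 \<le> \<alpha> j \<and> \<alpha> j \<le> 1"
  using alpha_mono[of 0 j] alpha_mono[of j n] alpha_0 alpha_n_le_1 by auto

definition \<beta> :: "nat \<Rightarrow> real" where
  "\<beta> j = \<alpha> j / (1 + \<alpha> j)"

abbreviation gain :: "real \<times> real \<Rightarrow> nat \<Rightarrow> s2 \<Rightarrow> real" where
  "gain w j c \<equiv> coord_gain \<alpha> j w (p j) (q j) c"

abbreviation ratio_bounds :: "(nat \<Rightarrow> s2) \<Rightarrow> nat \<Rightarrow> real \<times> real" where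
  "ratio_bounds x j \<equiv> coord_bounds (\<beta> j) (p j) (q j) (x j)"

abbreviation I :: "(nat \<Rightarrow> s2) set" where
  "I \<equiv> interval n p q"

abbreviation V :: "(nat \<Rightarrow> s2) \<Rightarrow> real \<times> real" where
  "V u \<equiv> vpt n \<alpha> u p q"

lemma interval_coordinatewise: "I = {u \<in> S2n n. \<forall>j\<in>{1..n}. u j \<in> s2_interval (p j) (q j)}"
  by (rule interval_eq_coordinatewise[OF p q])

lemma finite_interval: "finite I"
proof (rule finite_subset)
  show "I \<subseteq> {u. \<forall>j. (j \<in> {1..n} \<longrightarrow> u j \<in> UNIV) \<and> (j \<notin> {1..n} \<longrightarrow> u j = Zero)}"
    using S2n_outside by (auto simp: interval_coordinatewise)
  have univ: "(UNIV :: s2 set) = {Minus, Zero, Plus}" using s2.exhaust by blast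
  have "finite (UNIV :: s2 set)" unfolding univ by simp
  then show "finite {u. \<forall>j. (j \<in> {1..n} \<longrightarrow> u j \<in> UNIV) \<and> (j \<notin> {1..n} \<longrightarrow> u j = Zero)}"
    by (intro finite_set_of_finite_funs) simp_all
qed

definition lower_ratio :: "(nat \<Rightarrow> s2) \<Rightarrow> real" where
  "lower_ratio x = Max (insert 0 ((\<lambda>j. fst (ratio_bounds x j)) ` {1..n}))"

definition upper_ratio :: "(nat \<Rightarrow> s2) \<Rightarrow> real" where
  "upper_ratio x = Min (insert 1 ((\<lambda>j. snd (ratio_bounds x j)) ` {1..n}))"

lemma lower_ratio_ge:
  "0 \<le> lower_ratio x" "j \<in> {1..n} \<Longrightarrow> fst (ratio_bounds x j) \<le> lower_ratio x"
  unfolding lower_ratio_def by (intro Max_ge; simp)+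

lemma upper_ratio_le:
  "upper_ratio x \<le> 1" "j \<in> {1..n} \<Longrightarrow> upper_ratio x \<le> snd (ratio_bounds x j)"
  unfolding upper_ratio_def by (intro Min_le; simp)+

lemma maximizer_iff_coordinatewise:
  assumes x: "x \<in> I"
  shows "(\<forall>u\<in>I. w \<bullet> V u \<le> w \<bullet> V x) \<longleftrightarrow>
    (\<forall>j\<in>{1..n}. \<forall>c\<in>s2_interval (p j) (q j). gain w j c \<le> gain w j (x j))"
proof
  assume max: "\<forall>u\<in>I. w \<bullet> V u \<le> w \<bullet> V x"
  show "\<forall>j\<in>{1..n}. \<forall>c\<in>s2_interval (p j) (q j). gain w j c \<le> gain w j (x j)"
  proof (intro ballI)
    fix j c assume j: "j \<in> {1..n}" and c: "c \<in> s2_interval (p j) (q j)"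
    have "x(j := c) \<in> I"
      using x j c S2n_update[of x n j c] by (auto simp: interval_coordinatewise)
    then have "w \<bullet> V (x(j := c)) \<le> w \<bullet> V x" using max by blast
    moreover have "w \<bullet> V (x(j := c)) + gain w j (x j) = w \<bullet> V x + gain w j c"
      unfolding inner_vpt
      using j sum_add_swap_point[of "{1..n}" j "\<lambda>k. gain w k ((x(j := c)) k)" "\<lambda>k. gain w k (x k)"]
      by simp
    ultimately show "gain w j c \<le> gain w j (x j)" by simp
  qed
next
  assume "\<forall>j\<in>{1..n}. \<forall>c\<in>s2_interval (p j) (q j). gain w j c \<le> gain w j (x j)"
  moreover have "\<forall>j\<in>{1..n}. u j \<in> s2_interval (p j) (q j)" if "u \<in> I" for u
    using that by (simp add: interval_coordinatewise)
  ultimately show "\<forall>u\<in>I. w \<bullet> V u \<le> w \<bullet> V x"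
    unfolding inner_vpt by (blast intro: sum_mono)
qed

lemma maximizer_iff_ratio_bounds:
  assumes x: "x \<in> I" and w: "0 \<le> fst w" "0 \<le> snd w"
  shows "(\<forall>u\<in>I. w \<bullet> V u \<le> w \<bullet> V x) \<longleftrightarrow>
     lower_ratio x * (fst w + snd w) \<le> snd w \<and> snd w \<le> upper_ratio x * (fst w + snd w)"
proof -
  let ?l = "\<lambda>j. fst (ratio_bounds x j)"
  let ?r = "\<lambda>j. snd (ratio_bounds x j)"
  have "(\<forall>c\<in>s2_interval (p j) (q j). gain w j c \<le> gain w j (x j))
      \<longleftrightarrow> ?l j * (fst w + snd w) \<le> snd w \<and> snd w \<le> ?r j * (fst w + snd w)"
    if j: "j \<in> {1..n}" for j
    unfolding \<beta>_def
  proof (rule coord_gain_max_iff[where \<alpha> = \<alpha> and j = j and w = w and c = "x j"])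
    show "0 < \<alpha> j" using alpha_pos[OF j] .
    show "0 \<le> fst w" "0 \<le> snd w" using w .
    show "\<alpha> j \<le> 1" using alpha_bounds[of j] j by simp
    show "x j \<in> s2_interval (p j) (q j)" using x j by (simp add: interval_coordinatewise)
  qed
  then have "(\<forall>u\<in>I. w \<bullet> V u \<le> w \<bullet> V x) \<longleftrightarrow>
      (\<forall>j\<in>{1..n}. ?l j * (fst w + snd w) \<le> snd w \<and> snd w \<le> ?r j * (fst w + snd w))"
    unfolding maximizer_iff_coordinatewise[OF x] by (rule ball_cong[OF refl])
  also have "\<dots> \<longleftrightarrow>
      lower_ratio x * (fst w + snd w) \<le> snd w \<and> snd w \<le> upper_ratio x * (fst w + snd w)"
    unfolding lower_ratio_def upper_ratio_def using w
    by (simp add: Max_insert_0_mult_le_iff le_Min_insert_1_mult_iff ball_conj_distrib)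
  finally show ?thesis .
qed

lemma cone_eq_ratio_cone:
  assumes x: "x \<in> I"
  shows "cone n \<alpha> x p q = ratio_cone (lower_ratio x) (upper_ratio x)"
proof -
  have SUP: "w \<bullet> V x = (SUP z\<in>convI n \<alpha> p q. w \<bullet> z) \<longleftrightarrow> (\<forall>u\<in>I. w \<bullet> V u \<le> w \<bullet> V x)" for w
    unfolding convI_def using finite_interval x
    by (subst inner_eq_SUP_convex_hull_iff) auto
  show ?thesis
  proof (intro set_eqI)
    fix w :: "real \<times> real"
    obtain w1 w2 where w: "w = (w1, w2)" by (cases w)
    have "w \<in> cone n \<alpha> x p q \<longleftrightarrow> 0 \<le> w1 \<and> 0 \<le> w2 \<and> (\<forall>u\<in>I. w \<bullet> V u \<le> w \<bullet> V x)"
      using SUP[of w] w by (simp add: cone_def)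
    also have "\<dots> \<longleftrightarrow> 0 \<le> w1 \<and> 0 \<le> w2 \<and>
        lower_ratio x * (w1 + w2) \<le> w2 \<and> w2 \<le> upper_ratio x * (w1 + w2)"
      using maximizer_iff_ratio_bounds[OF x, of w] w by auto
    finally show "w \<in> cone n \<alpha> x p q \<longleftrightarrow> w \<in> ratio_cone (lower_ratio x) (upper_ratio x)"
      using w by (simp add: ratio_cone_def)
  qed
qed

lemma mem_Eset_if_ratio_less:
  assumes x: "x \<in> I" and less: "lower_ratio x < upper_ratio x"
  shows "x \<in> Eset n \<alpha> p q"
proof -
  define s where "s = (lower_ratio x + upper_ratio x) / 2"
  have s: "lower_ratio x < s" "s < upper_ratio x" "0 < s" "s < 1"
    using less lower_ratio_ge(1)[of x] upper_ratio_le(1)[of x] by (auto simp: s_def)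
  define w where "w = (1 - s, s)"
  \<comment> \<open>with the ratio \<open>s\<close> strictly inside every coordinate interval, \<open>x\<close> is the unique maximiser\<close>
  have strict: "w \<bullet> V u < w \<bullet> V x" if u: "u \<in> I" "u \<noteq> x" for u
  proof -
    have coord: "gain w j (u j) < gain w j (x j)"
      if j: "j \<in> {1..n}" "u j \<noteq> x j" for j
      unfolding w_def
      using alpha_pos[OF j(1)] alpha_bounds[of j] j u x s
        lower_ratio_ge(2)[OF j(1), of x] upper_ratio_le(2)[OF j(1), of x]
      by (intro coord_gain_strict_max) (auto simp: \<beta>_def interval_coordinatewise)
    have "\<forall>j\<in>{1..n}. gain w j (u j) \<le> gain w j (x j)"
      using coord by (metis order.order_iff_strict)
    moreover obtain j where "j \<in> {1..n}" "u j \<noteq> x j"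
      using u x S2n_eqI[of u n x] by (auto simp: interval_coordinatewise)
    ultimately show ?thesis
      unfolding inner_vpt using coord[of j] by (intro sum_strict_mono_ex1) auto
  qed
  have V_strict: "w \<bullet> z < w \<bullet> V x" if "z \<in> V ` I" "z \<noteq> V x" for z
    using that strict by auto
  have extreme: "V x extreme_point_of convI n \<alpha> p q"
    unfolding convI_def using x V_strict by (intro strict_maximizer_extreme_point) auto
  have "z = V x" if z: "z \<in> convI n \<alpha> p q" "fst (V x) \<le> fst z" "snd (V x) \<le> snd z" for z
  proof -
    have "w \<bullet> V x \<le> w \<bullet> z"
      using z s by (simp add: w_def inner_prod_def add_mono mult_left_mono)
    then show ?thesis
      using strict_maximizer_convex_hull[of "V x" "V ` I" w z] V_strict z x
      unfolding convI_def by force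
  qed
  then show ?thesis
    unfolding Eset_def using x extreme by blast
qed

lemma ratio_le_if_mem_Eset:
  assumes xE: "x \<in> Eset n \<alpha> p q"
  shows "lower_ratio x \<le> upper_ratio x"
proof -
  have x: "x \<in> I" and Vx: "V x \<in> convI n \<alpha> p q"
    and pareto: "\<And>z. z \<in> convI n \<alpha> p q \<Longrightarrow> fst (V x) \<le> fst z \<Longrightarrow> snd (V x) \<le> snd z \<Longrightarrow> z = V x"
    using xE unfolding Eset_def extreme_point_of_def by blast+
  have "\<not> (fst (V x) < fst z \<and> snd (V x) < snd z)" if "z \<in> convI n \<alpha> p q" for z
    using pareto[OF that] by fastforce
  then obtain w where w: "0 \<le> fst w" "0 \<le> snd w" "w \<noteq> 0"
    and max: "\<And>z. z \<in> convI n \<alpha> p q \<Longrightarrow> w \<bullet> z \<le> w \<bullet> V x"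
    using nonneg_supporting_functional[OF _ Vx] unfolding convI_def by blast
  have "\<forall>u\<in>I. w \<bullet> V u \<le> w \<bullet> V x"
    using max unfolding convI_def by (simp add: hull_inc)
  then have "lower_ratio x * (fst w + snd w) \<le> upper_ratio x * (fst w + snd w)"
    using maximizer_iff_ratio_bounds[OF x w(1,2)] by linarith
  moreover have "0 < fst w + snd w" using w by (auto simp: prod_eq_iff)
  ultimately show ?thesis by simp
qed

lemma frac_join_eq_ratio_gap:
  "frac_join n \<alpha> p q x = (if x \<in> I then max 0 (upper_ratio x - lower_ratio x) else 0)"
proof (cases "x \<in> Eset n \<alpha> p q")
  case True
  then have x: "x \<in> I" by (simp add: Eset_def)
  have "{u \<in> Eset n \<alpha> p q. u = x} = {x}" using True by blast
  then have "frac_join n \<alpha> p q x = cone_measure (ratio_cone (lower_ratio x) (upper_ratio x))"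
    by (simp add: frac_join_def cone_eq_ratio_cone[OF x])
  also have "\<dots> = upper_ratio x - lower_ratio x"
    using lower_ratio_ge(1) ratio_le_if_mem_Eset[OF True] upper_ratio_le(1)
    by (intro cone_measure_ratio_cone)
  finally show ?thesis using x ratio_le_if_mem_Eset[OF True] by simp
next
  case False
  then have empty: "{u \<in> Eset n \<alpha> p q. u = x} = {}" by blast
  have "frac_join n \<alpha> p q x = 0" unfolding frac_join_def empty by simp
  moreover have "x \<in> I \<Longrightarrow> upper_ratio x \<le> lower_ratio x"
    using False mem_Eset_if_ratio_less[of x] by fastforce
  ultimately show ?thesis by simp
qed

end

section \<open>The coefficients of the formal combination\<close>

lemma sum_telescope_window:
  fixes f :: "nat \<Rightarrow> real"
  assumes mono: "\<And>i j. i \<le> j \<Longrightarrow> j \<le> N \<Longrightarrow> f i \<le> f j" and "m \<le> N" "M \<le> N"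
  shows "(\<Sum>i<N. if m \<le> i \<and> i < M then f (Suc i) - f i else 0) = max 0 (f M - f m)"
proof (cases "m \<le> M")
  case True
  have "(\<Sum>i<N. if m \<le> i \<and> i < M then f (Suc i) - f i else 0) = (\<Sum>i\<in>{i\<in>{..<N}. m \<le> i \<and> i < M}. f (Suc i) - f i)"
    by (rule sum.inter_filter[symmetric]) simp
  also have "{i\<in>{..<N}. m \<le> i \<and> i < M} = {m..<M}" using assms by auto
  also have "(\<Sum>i = m..<M. f (Suc i) - f i) = f M - f m" by (rule sum_Suc_diff'[OF True])
  finally show ?thesis using mono[OF True \<open>M \<le> N\<close>] by simp
next
  case False
  then have "f M \<le> f m" using mono[of M m] assms by simp
  moreover have "(\<Sum>i<N. if m \<le> i \<and> i < M then f (Suc i) - f i else 0) = 0"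
    using False by (intro sum.neutral) auto
  ultimately show ?thesis by simp
qed

lemma ball_iff_le_threshold:
  fixes S P :: "nat set"
  assumes "finite S" "i < N"
  shows "(\<forall>j\<in>S. j \<in> P \<longleftrightarrow> j \<le> i) \<longleftrightarrow> Max (insert 0 (S \<inter> P)) \<le> i \<and> i < Min (insert N (S - P))"
proof -
  have "Max (insert 0 (S \<inter> P)) \<le> i \<longleftrightarrow> (\<forall>j\<in>S \<inter> P. j \<le> i)"
    "i < Min (insert N (S - P)) \<longleftrightarrow> (\<forall>j\<in>S - P. i < j)"
    using assms by simp_all
  moreover have "(\<forall>j\<in>S. j \<in> P \<longleftrightarrow> j \<le> i) \<longleftrightarrow> (\<forall>j\<in>S \<inter> P. j \<le> i) \<and> (\<forall>j\<in>S - P. i < j)"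
    by (auto simp: not_le[symmetric])
  ultimately show ?thesis by simp
qed

lemma s2_vL_vR_eq_join_plus:
  assumes "\<not> (a = Minus \<and> b = Plus)" "\<not> (a = Plus \<and> b = Minus)"
  shows "s2_vL a b = s2_join_plus a b \<and> s2_vR a b = s2_join_plus a b"
  using assms
  by (cases a; cases b) (simp_all add: s2_vL_def s2_vR_def s2_join_plus_def s2_join_def s2_le_def
      doubleton_eq_iff)

lemma s2_ops_opposite [simp]:
  "s2_join_plus Minus Plus = Plus" "s2_join_plus Plus Minus = Plus"
  "s2_vL Minus Plus = Minus" "s2_vL Plus Minus = Plus"
  "s2_vR Minus Plus = Plus" "s2_vR Plus Minus = Minus"
  by (simp_all add: s2_join_plus_def s2_vL_def s2_vR_def doubleton_eq_iff)

lemma s2_ops_Zero [simp]: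
  "s2_join_plus Zero Zero = Zero" "s2_join Zero Zero = Zero" "s2_vL Zero Zero = Zero" "s2_vR Zero Zero = Zero"
  by (simp_all add: s2_join_plus_def s2_join_def s2_le_def s2_vL_def s2_vR_def)

context frac_join_setting
begin

lemma beta_0: "\<beta> 0 = 0"
  by (simp add: \<beta>_def alpha_0)

lemma beta_mono:
  assumes "i \<le> j" "j \<le> n"
  shows "\<beta> i \<le> \<beta> j"
proof -
  have "\<alpha> i \<le> \<alpha> j" "0 \<le> \<alpha> i" "0 \<le> \<alpha> j"
    using alpha_mono[OF assms] alpha_bounds[of i] alpha_bounds[of j] assms by auto
  moreover from this have "\<alpha> i * (1 + \<alpha> j) \<le> \<alpha> j * (1 + \<alpha> i)"
    by (simp add: algebra_simps)
  ultimately show ?thesis by (simp add: \<beta>_def field_simps)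
qed

lemma beta_bounds: "j \<le> n \<Longrightarrow> 0 \<le> \<beta> j \<and> \<beta> j \<le> 1 / 2"
  using alpha_bounds[of j] by (simp add: \<beta>_def field_simps)

definition combination_coeff :: "(nat \<Rightarrow> s2) \<Rightarrow> real" where
  "combination_coeff x =
     (\<Sum>i<n. (1 / (1 + \<alpha> i) - 1 / (1 + \<alpha> (Suc i))) *
        ((if x = vL_i i p q then 1 else 0) + (if x = vR_i i p q then 1 else 0)))
     + (1 - \<alpha> n) / (1 + \<alpha> n) * (if x = join_i n p q then 1 else 0)"

lemma combination_coeff_eq_beta:
  "combination_coeff x = (\<Sum>i<n. if x = vL_i i p q then \<beta> (Suc i) - \<beta> i else 0)
     + (\<Sum>i<n. if x = vR_i i p q then \<beta> (Suc i) - \<beta> i else 0)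
     + (if x = join_i n p q then 1 - 2 * \<beta> n else 0)"
proof -
  have "(1 / (1 + \<alpha> i) - 1 / (1 + \<alpha> (Suc i))) *
          ((if x = vL_i i p q then 1 else 0) + (if x = vR_i i p q then 1 else 0))
        = (if x = vL_i i p q then \<beta> (Suc i) - \<beta> i else 0) + (if x = vR_i i p q then \<beta> (Suc i) - \<beta> i else 0)"
    if "i < n" for i
  proof -
    have "0 \<le> \<alpha> i" "0 \<le> \<alpha> (Suc i)" using alpha_bounds that by auto
    then have "1 / (1 + \<alpha> i) - 1 / (1 + \<alpha> (Suc i)) = \<beta> (Suc i) - \<beta> i"
      by (simp add: \<beta>_def field_simps)
    then show ?thesis by (simp add: distrib_left)
  qed
  then have "(\<Sum>i<n. (1 / (1 + \<alpha> i) - 1 / (1 + \<alpha> (Suc i))) *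
          ((if x = vL_i i p q then 1 else 0) + (if x = vR_i i p q then 1 else 0)))
      = (\<Sum>i<n. if x = vL_i i p q then \<beta> (Suc i) - \<beta> i else 0)
        + (\<Sum>i<n. if x = vR_i i p q then \<beta> (Suc i) - \<beta> i else 0)"
    unfolding sum.distrib[symmetric] by (intro sum.cong) simp_all
  moreover have "(1 - \<alpha> n) / (1 + \<alpha> n) = 1 - 2 * \<beta> n"
    using alpha_bounds[of n] by (simp add: \<beta>_def field_simps)
  ultimately show ?thesis
    unfolding combination_coeff_def by simp
qed

definition neg_pos :: "nat set" where
  "neg_pos = {j \<in> {1..n}. p j = Minus \<and> q j = Plus}"

definition pos_neg :: "nat set" where
  "pos_neg = {j \<in> {1..n}. p j = Plus \<and> q j = Minus}"

text \<open>
  Admissible points are the only candidates on both sides of the identity: \<open>vL_i\<close>, \<open>vR_i\<close> and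
  \<open>join_i\<close> produce admissible points, while a non-admissible point of the interval has an empty
  interval of supporting ratios.
\<close>

definition admissible :: "(nat \<Rightarrow> s2) \<Rightarrow> bool" where
  "admissible x \<longleftrightarrow> x \<in> S2n n \<and> (\<forall>j\<in>{1..n}.
     if j \<in> neg_pos \<union> pos_neg then x j \<noteq> Zero else x j = s2_join_plus (p j) (q j))"

lemma opposite_disjoint: "neg_pos \<inter> pos_neg = {}"
  by (auto simp: neg_pos_def pos_neg_def)

lemma opposite_subset: "neg_pos \<subseteq> {1..n}" "pos_neg \<subseteq> {1..n}"
  by (auto simp: neg_pos_def pos_neg_def)

lemma p_q_Zero_outside: "j \<notin> {1..n} \<Longrightarrow> p j = Zero \<and> q j = Zero"
  using S2n_outside p q by blast

lemma admissible_in_interval: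
  assumes "admissible x"
  shows "x \<in> I"
proof -
  have opposite: "c \<in> s2_interval a b" if "(a = Minus \<and> b = Plus) \<or> (a = Plus \<and> b = Minus)" for a b c
    using that by (cases c) (auto simp: s2_interval_def s2_dist_def)
  moreover have join: "s2_join_plus a b \<in> s2_interval a b" for a b
    by (cases a; cases b)
      (simp_all add: s2_interval_def s2_dist_def s2_join_plus_def s2_join_def s2_le_def doubleton_eq_iff)
  ultimately have "x j \<in> s2_interval (p j) (q j)" if "j \<in> {1..n}" for j
    using assms that
    by (cases "j \<in> neg_pos \<union> pos_neg") (auto simp: admissible_def neg_pos_def pos_neg_def)
  then show ?thesis
    using assms by (simp add: admissible_def interval_coordinatewise)
qed

lemma admissible_vL_i: "admissible (vL_i i p q)"
  using p_q_Zero_outside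
  by (auto simp: admissible_def S2n_def vL_i_def op_i_def neg_pos_def pos_neg_def s2_vL_vR_eq_join_plus)

lemma admissible_vR_i: "admissible (vR_i i p q)"
  using p_q_Zero_outside
  by (auto simp: admissible_def S2n_def vR_i_def op_i_def neg_pos_def pos_neg_def s2_vL_vR_eq_join_plus)

lemma admissible_join_i: "admissible (join_i n p q)"
  using p_q_Zero_outside
  by (auto simp: admissible_def S2n_def join_i_def op_i_def neg_pos_def pos_neg_def)

lemma admissible_eq_iff:
  assumes x: "admissible x" and y: "admissible y"
  shows "x = y \<longleftrightarrow> (\<forall>j\<in>neg_pos \<union> pos_neg. x j = Plus \<longleftrightarrow> y j = Plus)"
proof
  assume plus: "\<forall>j\<in>neg_pos \<union> pos_neg. x j = Plus \<longleftrightarrow> y j = Plus"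
  have "x \<in> S2n n" "y \<in> S2n n" using x y by (simp_all add: admissible_def)
  then show "x = y"
  proof (rule S2n_eqI)
    fix j assume j: "j \<in> {1..n}"
    show "x j = y j"
    proof (cases "j \<in> neg_pos \<union> pos_neg")
      case True
      then have "x j \<noteq> Zero" "y j \<noteq> Zero" "x j = Plus \<longleftrightarrow> y j = Plus"
        using x y j plus by (auto simp: admissible_def)
      then show ?thesis by (cases "x j"; cases "y j") simp_all
    next
      case False
      then show ?thesis using x y j by (simp add: admissible_def)
    qed
  qed
qed simp

lemma vL_i_Plus_iff: "j \<in> neg_pos \<union> pos_neg \<Longrightarrow> vL_i i p q j = Plus \<longleftrightarrow> (j \<in> neg_pos \<longrightarrow> j \<le> i)"
  by (auto simp: vL_i_def op_i_def neg_pos_def pos_neg_def)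

lemma vR_i_Plus_iff: "j \<in> neg_pos \<union> pos_neg \<Longrightarrow> vR_i i p q j = Plus \<longleftrightarrow> (j \<in> pos_neg \<longrightarrow> j \<le> i)"
  by (auto simp: vR_i_def op_i_def neg_pos_def pos_neg_def)

lemma join_i_Plus: "j \<in> neg_pos \<union> pos_neg \<Longrightarrow> join_i n p q j = Plus"
  by (auto simp: join_i_def op_i_def neg_pos_def pos_neg_def)

lemma eq_vL_i_iff:
  assumes "admissible x"
  shows "x = vL_i i p q \<longleftrightarrow> (\<forall>j\<in>pos_neg. x j = Plus) \<and> (\<forall>j\<in>neg_pos. x j = Plus \<longleftrightarrow> j \<le> i)"
proof -
  have "x = vL_i i p q \<longleftrightarrow> (\<forall>j\<in>neg_pos \<union> pos_neg. x j = Plus \<longleftrightarrow> (j \<in> neg_pos \<longrightarrow> j \<le> i))"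
    using admissible_eq_iff[OF assms admissible_vL_i] vL_i_Plus_iff by simp
  then show ?thesis using opposite_disjoint by blast
qed

lemma eq_vR_i_iff:
  assumes "admissible x"
  shows "x = vR_i i p q \<longleftrightarrow> (\<forall>j\<in>neg_pos. x j = Plus) \<and> (\<forall>j\<in>pos_neg. x j = Plus \<longleftrightarrow> j \<le> i)"
proof -
  have "x = vR_i i p q \<longleftrightarrow> (\<forall>j\<in>neg_pos \<union> pos_neg. x j = Plus \<longleftrightarrow> (j \<in> pos_neg \<longrightarrow> j \<le> i))"
    using admissible_eq_iff[OF assms admissible_vR_i] vR_i_Plus_iff by simp
  then show ?thesis using opposite_disjoint by blast
qed

lemma eq_join_i_iff: "admissible x \<Longrightarrow> x = join_i n p q \<longleftrightarrow> (\<forall>j\<in>neg_pos \<union> pos_neg. x j = Plus)"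
  by (simp add: admissible_eq_iff[OF _ admissible_join_i] join_i_Plus)

text \<open>The defaults \<open>0\<close> and \<open>n\<close> keep the telescoping sums below uniform when there is no such index.\<close>

definition last_plus :: "nat set \<Rightarrow> (nat \<Rightarrow> s2) \<Rightarrow> nat" where
  "last_plus S x = Max (insert 0 {j \<in> S. x j = Plus})"

definition first_nonplus :: "nat set \<Rightarrow> (nat \<Rightarrow> s2) \<Rightarrow> nat" where
  "first_nonplus S x = Min (insert n {j \<in> S. x j \<noteq> Plus})"

lemma last_plus_spec:
  assumes "S \<subseteq> {1..n}"
  shows "last_plus S x \<le> n" "\<And>j. j \<in> S \<Longrightarrow> x j = Plus \<Longrightarrow> j \<le> last_plus S x"
    "last_plus S x = 0 \<or> last_plus S x \<in> S \<and> x (last_plus S x) = Plus"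
proof -
  have "finite S" using assms finite_subset by blast
  then have fin: "finite {j \<in> S. x j = Plus}" by simp
  show "last_plus S x \<le> n" "\<And>j. j \<in> S \<Longrightarrow> x j = Plus \<Longrightarrow> j \<le> last_plus S x"
    using fin assms by (auto simp: last_plus_def)
  show "last_plus S x = 0 \<or> last_plus S x \<in> S \<and> x (last_plus S x) = Plus"
    using Max_in[of "insert 0 {j \<in> S. x j = Plus}"] fin by (auto simp: last_plus_def)
qed

lemma first_nonplus_spec:
  assumes "S \<subseteq> {1..n}"
  shows "first_nonplus S x \<le> n" "\<And>j. j \<in> S \<Longrightarrow> x j \<noteq> Plus \<Longrightarrow> first_nonplus S x \<le> j"
    "(\<forall>j\<in>S. x j = Plus) \<Longrightarrow> first_nonplus S x = n"
    "\<not> (\<forall>j\<in>S. x j = Plus) \<Longrightarrow> first_nonplus S x \<in> S \<and> x (first_nonplus S x) \<noteq> Plus"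
proof -
  have "finite S" using assms finite_subset by blast
  then have fin: "finite {j \<in> S. x j \<noteq> Plus}" by simp
  show "first_nonplus S x \<le> n" "\<And>j. j \<in> S \<Longrightarrow> x j \<noteq> Plus \<Longrightarrow> first_nonplus S x \<le> j"
    using fin by (auto simp: first_nonplus_def)
  show "(\<forall>j\<in>S. x j = Plus) \<Longrightarrow> first_nonplus S x = n"
  proof -
    assume "\<forall>j\<in>S. x j = Plus"
    then have empty: "{j \<in> S. x j \<noteq> Plus} = {}" by blast
    show ?thesis unfolding first_nonplus_def empty by simp
  qed
  assume "\<not> (\<forall>j\<in>S. x j = Plus)"
  then obtain j where j: "j \<in> S" "x j \<noteq> Plus" by blast
  have "first_nonplus S x \<le> j" "j \<le> n" using fin j assms by (auto simp: first_nonplus_def)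
  moreover have "first_nonplus S x \<in> insert n {j \<in> S. x j \<noteq> Plus}"
    unfolding first_nonplus_def using fin by (intro Min_in) auto
  ultimately show "first_nonplus S x \<in> S \<and> x (first_nonplus S x) \<noteq> Plus"
    using j by (cases "first_nonplus S x = n") auto
qed

lemma sum_eq_vL_i:
  assumes x: "admissible x"
  shows "(\<Sum>i<n. if x = vL_i i p q then \<beta> (Suc i) - \<beta> i else 0) =
    (if \<forall>j\<in>pos_neg. x j = Plus then max 0 (\<beta> (first_nonplus neg_pos x) - \<beta> (last_plus neg_pos x)) else 0)"
proof (cases "\<forall>j\<in>pos_neg. x j = Plus")
  case True
  have "x = vL_i i p q \<longleftrightarrow> last_plus neg_pos x \<le> i \<and> i < first_nonplus neg_pos x" if "i < n" for i
    unfolding eq_vL_i_iff[OF x] last_plus_def first_nonplus_def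
    using True ball_iff_le_threshold[of neg_pos i n "{j. x j = Plus}"] opposite_subset that
    by (simp add: finite_subset Int_def set_diff_eq)
  then have "(\<Sum>i<n. if x = vL_i i p q then \<beta> (Suc i) - \<beta> i else 0) =
      (\<Sum>i<n. if last_plus neg_pos x \<le> i \<and> i < first_nonplus neg_pos x then \<beta> (Suc i) - \<beta> i else 0)"
    by (intro sum.cong) auto
  also have "\<dots> = max 0 (\<beta> (first_nonplus neg_pos x) - \<beta> (last_plus neg_pos x))"
    using last_plus_spec(1) first_nonplus_spec(1) opposite_subset beta_mono by (intro sum_telescope_window) auto
  finally show ?thesis using True by simp
next
  case False
  then have "x \<noteq> vL_i i p q" for i using eq_vL_i_iff[OF x] by blast
  then show ?thesis using False by auto
qed

lemma sum_eq_vR_i: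
  assumes x: "admissible x"
  shows "(\<Sum>i<n. if x = vR_i i p q then \<beta> (Suc i) - \<beta> i else 0) =
    (if \<forall>j\<in>neg_pos. x j = Plus then max 0 (\<beta> (first_nonplus pos_neg x) - \<beta> (last_plus pos_neg x)) else 0)"
proof (cases "\<forall>j\<in>neg_pos. x j = Plus")
  case True
  have "x = vR_i i p q \<longleftrightarrow> last_plus pos_neg x \<le> i \<and> i < first_nonplus pos_neg x" if "i < n" for i
    unfolding eq_vR_i_iff[OF x] last_plus_def first_nonplus_def
    using True ball_iff_le_threshold[of pos_neg i n "{j. x j = Plus}"] opposite_subset that
    by (simp add: finite_subset Int_def set_diff_eq)
  then have "(\<Sum>i<n. if x = vR_i i p q then \<beta> (Suc i) - \<beta> i else 0) =
      (\<Sum>i<n. if last_plus pos_neg x \<le> i \<and> i < first_nonplus pos_neg x then \<beta> (Suc i) - \<beta> i else 0)"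
    by (intro sum.cong) auto
  also have "\<dots> = max 0 (\<beta> (first_nonplus pos_neg x) - \<beta> (last_plus pos_neg x))"
    using last_plus_spec(1) first_nonplus_spec(1) opposite_subset beta_mono by (intro sum_telescope_window) auto
  finally show ?thesis using True by simp
next
  case False
  then have "x \<noteq> vR_i i p q" for i using eq_vR_i_iff[OF x] by blast
  then show ?thesis using False by auto
qed

lemma coord_bounds_admissible:
  assumes "admissible x" "j \<in> {1..n}"
  shows "coord_bounds t (p j) (q j) (x j) =
    (if j \<in> neg_pos then (if x j = Plus then (t, 1) else (0, t))
     else if j \<in> pos_neg then (if x j = Plus then (0, 1 - t) else (1 - t, 1))
     else (0, 1))"
proof -
  have "if j \<in> neg_pos \<union> pos_neg then x j \<noteq> Zero else x j = s2_join_plus (p j) (q j)"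
    using assms by (simp add: admissible_def)
  then show ?thesis
    using assms(2)
    by (cases "p j"; cases "q j"; cases "x j")
      (simp_all add: neg_pos_def pos_neg_def coord_bounds_def s2_join_plus_def s2_join_def s2_le_def
        doubleton_eq_iff)
qed

lemma lower_ratio_admissible:
  assumes x: "admissible x"
  shows "lower_ratio x = (if \<forall>j\<in>pos_neg. x j = Plus then \<beta> (last_plus neg_pos x)
                          else 1 - \<beta> (first_nonplus pos_neg x))"
proof -
  let ?l = "\<lambda>j. fst (ratio_bounds x j)"
  have l: "?l j = (if j \<in> neg_pos \<and> x j = Plus then \<beta> j else if j \<in> pos_neg \<and> x j \<noteq> Plus then 1 - \<beta> j else 0)"
    if "j \<in> {1..n}" for j
    using coord_bounds_admissible[OF x that] opposite_disjoint by auto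
  have \<beta>: "0 \<le> \<beta> j" "\<beta> j \<le> 1 / 2" if "j \<le> n" for j
    using beta_bounds that by auto
  have Max_eq: "lower_ratio x = v"
    if "\<And>j. j \<in> {1..n} \<Longrightarrow> ?l j \<le> v" "0 \<le> v" "v = 0 \<or> (\<exists>j\<in>{1..n}. ?l j = v)" for v
    unfolding lower_ratio_def using that by (intro Max_eqI) auto
  show ?thesis
  proof (cases "\<forall>j\<in>pos_neg. x j = Plus")
    case True
    define m where "m = last_plus neg_pos x"
    note m = last_plus_spec[OF opposite_subset(1), where x = x, folded m_def]
    have "\<beta> j \<le> \<beta> m" if "j \<in> neg_pos" "x j = Plus" for j
      using m that by (intro beta_mono) auto
    then have "?l j \<le> \<beta> m" if "j \<in> {1..n}" for j
      using l[OF that] True \<beta>[OF m(1)] by auto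
    moreover have "\<beta> m = 0 \<or> (\<exists>j\<in>{1..n}. ?l j = \<beta> m)"
    proof (cases "m = 0")
      case False
      then have "m \<in> neg_pos" "x m = Plus" "m \<in> {1..n}" using m(3) opposite_subset by auto
      then have "?l m = \<beta> m" using l[of m] by simp
      then show ?thesis using \<open>m \<in> {1..n}\<close> by blast
    qed (simp add: beta_0)
    ultimately show ?thesis using Max_eq \<beta>[OF m(1)] True by (simp add: m_def)
  next
    case False
    define m where "m = first_nonplus pos_neg x"
    note m = first_nonplus_spec[OF opposite_subset(2), where x = x, folded m_def]
    have m_in: "m \<in> pos_neg" "x m \<noteq> Plus" "m \<in> {1..n}"
      using m(4) False opposite_subset by auto
    have "\<beta> j \<le> 1 - \<beta> m" if "j \<in> {1..n}" for j
      using \<beta>[of j] \<beta>[of m] that m(1) by auto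
    moreover have "1 - \<beta> j \<le> 1 - \<beta> m" if "j \<in> pos_neg" "x j \<noteq> Plus" for j
      using m that opposite_subset beta_mono[of m j] by auto
    ultimately have "?l j \<le> 1 - \<beta> m" if "j \<in> {1..n}" for j
      using l[OF that] \<beta>[OF m(1)] that by auto
    moreover have "?l m = 1 - \<beta> m"
      using l[OF m_in(3)] m_in opposite_disjoint by auto
    then have "\<exists>j\<in>{1..n}. ?l j = 1 - \<beta> m" using m_in(3) by blast
    ultimately have "lower_ratio x = 1 - \<beta> m"
      using \<beta>[OF m(1)] by (intro Max_eq) auto
    then show ?thesis using False by (auto simp: m_def)
  qed
qed

lemma upper_ratio_admissible:
  assumes x: "admissible x"
  shows "upper_ratio x = (if \<forall>j\<in>neg_pos. x j = Plus then 1 - \<beta> (last_plus pos_neg x)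
                          else \<beta> (first_nonplus neg_pos x))"
proof -
  let ?r = "\<lambda>j. snd (ratio_bounds x j)"
  have r: "?r j = (if j \<in> neg_pos \<and> x j \<noteq> Plus then \<beta> j else if j \<in> pos_neg \<and> x j = Plus then 1 - \<beta> j else 1)"
    if "j \<in> {1..n}" for j
    using coord_bounds_admissible[OF x that] opposite_disjoint by auto
  have \<beta>: "0 \<le> \<beta> j" "\<beta> j \<le> 1 / 2" if "j \<le> n" for j
    using beta_bounds that by auto
  have Min_eq: "upper_ratio x = v"
    if "\<And>j. j \<in> {1..n} \<Longrightarrow> v \<le> ?r j" "v \<le> 1" "v = 1 \<or> (\<exists>j\<in>{1..n}. ?r j = v)" for v
    unfolding upper_ratio_def using that by (intro Min_eqI) auto
  show ?thesis
  proof (cases "\<forall>j\<in>neg_pos. x j = Plus")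
    case True
    define m where "m = last_plus pos_neg x"
    note m = last_plus_spec[OF opposite_subset(2), where x = x, folded m_def]
    have "\<beta> j \<le> \<beta> m" if "j \<in> pos_neg" "x j = Plus" for j
      using m that by (intro beta_mono) auto
    then have "1 - \<beta> m \<le> ?r j" if "j \<in> {1..n}" for j
      using r[OF that] True \<beta>[OF m(1)] by auto
    moreover have "1 - \<beta> m = 1 \<or> (\<exists>j\<in>{1..n}. ?r j = 1 - \<beta> m)"
    proof (cases "m = 0")
      case False
      then have "m \<in> pos_neg" "m \<notin> neg_pos" "x m = Plus" "m \<in> {1..n}"
        using m(3) opposite_subset opposite_disjoint by auto
      then have "?r m = 1 - \<beta> m" using r[of m] by simp
      then show ?thesis using \<open>m \<in> {1..n}\<close> by blast
    qed (simp add: beta_0)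
    ultimately show ?thesis using Min_eq \<beta>[OF m(1)] True by (simp add: m_def)
  next
    case False
    define m where "m = first_nonplus neg_pos x"
    note m = first_nonplus_spec[OF opposite_subset(1), where x = x, folded m_def]
    have m_in: "m \<in> neg_pos" "x m \<noteq> Plus" "m \<in> {1..n}"
      using m(4) False opposite_subset by auto
    have "\<beta> m \<le> 1 - \<beta> j" if "j \<in> {1..n}" for j
      using \<beta>[of j] \<beta>[of m] that m(1) by auto
    moreover have "\<beta> m \<le> \<beta> j" if "j \<in> neg_pos" "x j \<noteq> Plus" for j
      using m that opposite_subset beta_mono[of m j] by auto
    ultimately have "\<beta> m \<le> ?r j" if "j \<in> {1..n}" for j
      using r[OF that] \<beta>[OF m(1)] that by auto
    moreover have "?r m = \<beta> m"
      using r[OF m_in(3)] m_in by auto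
    then have "\<exists>j\<in>{1..n}. ?r j = \<beta> m" using m_in(3) by blast
    ultimately have "upper_ratio x = \<beta> m"
      using \<beta>[OF m(1)] by (intro Min_eq) auto
    then show ?thesis using False by (auto simp: m_def)
  qed
qed

lemma combination_coeff_admissible:
  assumes x: "admissible x"
  shows "combination_coeff x = max 0 (upper_ratio x - lower_ratio x)"
proof -
  define A where "A \<longleftrightarrow> (\<forall>j\<in>neg_pos. x j = Plus)"
  define B where "B \<longleftrightarrow> (\<forall>j\<in>pos_neg. x j = Plus)"
  define a where "a = \<beta> (last_plus neg_pos x)"
  define a' where "a' = \<beta> (first_nonplus neg_pos x)"
  define b where "b = \<beta> (last_plus pos_neg x)"
  define b' where "b' = \<beta> (first_nonplus pos_neg x)"
  have AB: "(\<forall>j\<in>neg_pos \<union> pos_neg. x j = Plus) \<longleftrightarrow> A \<and> B"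
    unfolding A_def B_def by blast
  have coeff: "combination_coeff x = (if B then max 0 (a' - a) else 0) + (if A then max 0 (b' - b) else 0)
      + (if A \<and> B then 1 - 2 * \<beta> n else 0)"
    unfolding combination_coeff_eq_beta sum_eq_vL_i[OF x] sum_eq_vR_i[OF x] eq_join_i_iff[OF x] AB
    by (simp add: A_def B_def a_def a'_def b_def b'_def)
  have lower: "lower_ratio x = (if B then a else 1 - b')"
    using lower_ratio_admissible[OF x] by (simp add: B_def a_def b'_def)
  have upper: "upper_ratio x = (if A then 1 - b else a')"
    using upper_ratio_admissible[OF x] by (simp add: A_def b_def a'_def)
  have bounds: "0 \<le> \<beta> (last_plus S x)" "\<beta> (last_plus S x) \<le> \<beta> n"
    "0 \<le> \<beta> (first_nonplus S x)" "\<beta> (first_nonplus S x) \<le> 1 / 2"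
    if "S \<subseteq> {1..n}" for S
    using last_plus_spec(1)[OF that] first_nonplus_spec(1)[OF that] beta_bounds beta_mono by auto
  have "a \<le> \<beta> n" "b \<le> \<beta> n" "0 \<le> a" "0 \<le> b" "a' \<le> 1 / 2" "b' \<le> 1 / 2" "\<beta> n \<le> 1 / 2"
    using bounds opposite_subset beta_bounds[of n] by (auto simp: a_def b_def a'_def b'_def)
  moreover have "A \<Longrightarrow> a' = \<beta> n" "B \<Longrightarrow> b' = \<beta> n"
    using first_nonplus_spec(3) opposite_subset by (auto simp: A_def B_def a'_def b'_def)
  ultimately show ?thesis
    unfolding coeff lower upper by (auto simp: max_def)
qed

lemma ratio_gap_nonpos_if_not_admissible:
  assumes x: "x \<in> I" and "\<not> admissible x"
  shows "upper_ratio x \<le> lower_ratio x"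
proof -
  obtain j where j: "j \<in> {1..n}"
    and bad: "if j \<in> neg_pos \<union> pos_neg then x j = Zero else x j \<noteq> s2_join_plus (p j) (q j)"
    using assms by (auto simp: admissible_def interval_coordinatewise split: if_splits)
  have "x j \<in> s2_interval (p j) (q j)" using x j by (simp add: interval_coordinatewise)
  then have "snd (ratio_bounds x j) \<le> fst (ratio_bounds x j)"
    using bad j
    by (cases "p j"; cases "q j"; cases "x j")
      (simp_all add: neg_pos_def pos_neg_def coord_bounds_def s2_interval_def s2_dist_def
        s2_join_plus_def s2_join_def s2_le_def doubleton_eq_iff)
  then show ?thesis using lower_ratio_ge(2)[OF j, of x] upper_ratio_le(2)[OF j, of x] by linarith
qed

lemma combination_coeff_eq_ratio_gap:
  "combination_coeff x = (if x \<in> I then max 0 (upper_ratio x - lower_ratio x) else 0)"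
proof (cases "admissible x")
  case True
  then show ?thesis using combination_coeff_admissible admissible_in_interval by simp
next
  case False
  then have "combination_coeff x = 0"
    using admissible_vL_i admissible_vR_i admissible_join_i
    by (auto simp: combination_coeff_def intro!: sum.neutral)
  then show ?thesis using ratio_gap_nonpos_if_not_admissible[OF _ False] by simp
qed

end

theorem proposition3p15:
  fixes n :: nat and \<alpha> :: "nat \<Rightarrow> real" and p q :: "nat \<Rightarrow> s2"
  assumes alpha0: "\<alpha> 0 = 0"
    and pos: "n \<ge> 1 \<Longrightarrow> 0 < \<alpha> 1"
    and mono: "\<And>j. 1 \<le> j \<Longrightarrow> j < n \<Longrightarrow> \<alpha> j \<le> \<alpha> (Suc j)"
    and le1: "\<alpha> n \<le> 1"
    and p: "p \<in> S2n n" and q: "q \<in> S2n n"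
  shows "frac_join n \<alpha> p q =
    (\<lambda>x. (\<Sum>i<n. (1 / (1 + \<alpha> i) - 1 / (1 + \<alpha> (Suc i))) *
              ((if x = vL_i i p q then 1 else 0) + (if x = vR_i i p q then 1 else 0)))
         + (1 - \<alpha> n) / (1 + \<alpha> n) * (if x = join_i n p q then 1 else 0))"
proof -
  interpret frac_join_setting n \<alpha> p q
    using assms by unfold_locales
  have "frac_join n \<alpha> p q x = combination_coeff x" for x
    using frac_join_eq_ratio_gap combination_coeff_eq_ratio_gap by simp
  then show ?thesis unfolding combination_coeff_def by (intro ext)
qed

end
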